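(* Let $G=SL_n(\mathbb C)$ or $G=GL_n(\mathbb C)$, let $B$ be the Borel subgroup of upper triangular matrices, and let $w\in S_n$. If there exist $x\in\mathfrak g$ and a Hessenberg space $H\subseteq\mathfrak g$ such that $\mathcal B(x,H)=X_w$, then $w$ avoids the pattern $[4231]$.
   Context: $\mathfrak g$ is the Lie algebra of $G$ and $\mathfrak b$ that of $B$. The Weyl group is $S_n$; $w\in S_n$ is written in one-line notation $[w_1\cdots w_n]$, $w_i=w(i)$, and $\dot w$ is a scalar multiple in $G$ of the permutation matrix with $e_i\mapsto e_{w(i)}$. $X_w$ is the closure in $G/B$ of $B\dot wB/B$. A Hessenberg space is a subspace $H\subseteq\mathfrak g$ with $[\mathfrak b,H]\subseteq H$; $\mathcal B(x,H)=\{gB\in G/B:g^{-1}xg\in H\}$. For $v\in S_m$, $w\in S_n$, $w$ contains the pattern $v$ if there are indices $i_1<\dots<i_m$ such that for all $a,b\in[m]$, $w_{i_a}<w_{i_b}$ iff $v_a<v_b$; otherwise $w$ avoids $v$. *)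

theory Defs
  imports "Jordan_Normal_Form.Determinant" "HOL-Combinatorics.Permutations"
begin

datatype group_kind = GL | SL

definition mtrace :: "complex mat \<Rightarrow> complex" where
  "mtrace A = (\<Sum>i<dim_row A. A $$ (i,i))"

definition grp :: "group_kind \<Rightarrow> nat \<Rightarrow> complex mat set" where
  "grp k n = {g \<in> carrier_mat n n. (case k of GL \<Rightarrow> det g \<noteq> 0 | SL \<Rightarrow> det g = 1)}"

definition lie :: "group_kind \<Rightarrow> nat \<Rightarrow> complex mat set" where
  "lie k n = {y \<in> carrier_mat n n. (case k of GL \<Rightarrow> True | SL \<Rightarrow> mtrace y = 0)}"

definition borel :: "group_kind \<Rightarrow> nat \<Rightarrow> complex mat set" where
  "borel k n = {b \<in> grp k n. upper_triangular b}"

definition borel_lie :: "group_kind \<Rightarrow> nat \<Rightarrow> complex mat set" where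
  "borel_lie k n = {y \<in> lie k n. upper_triangular y}"

text \<open>Permutation matrix of w (0-based indices): e_j maps to e_(w j).\<close>
definition perm_mat :: "nat \<Rightarrow> (nat \<Rightarrow> nat) \<Rightarrow> complex mat" where
  "perm_mat n w = mat n n (\<lambda>(i,j). if i = w j then 1 else 0)"

text \<open>Bruhat cell B w B in G, with w-dot any scalar multiple of the permutation matrix lying in G.\<close>
definition bruhat_cell :: "group_kind \<Rightarrow> nat \<Rightarrow> (nat \<Rightarrow> nat) \<Rightarrow> complex mat set" where
  "bruhat_cell k n w = {b1 * (c \<cdot>\<^sub>m perm_mat n w) * b2 | b1 b2 c.
      b1 \<in> borel k n \<and> b2 \<in> borel k n \<and> c \<cdot>\<^sub>m perm_mat n w \<in> grp k n}"

text \<open>Closure in G with respect to the (Euclidean) matrix topology, via entrywise convergent sequences.\<close>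
definition closure_in_grp :: "group_kind \<Rightarrow> nat \<Rightarrow> complex mat set \<Rightarrow> complex mat set" where
  "closure_in_grp k n S = {g \<in> grp k n. \<exists>s :: nat \<Rightarrow> complex mat.
      (\<forall>m. s m \<in> S) \<and> (\<forall>i<n. \<forall>j<n. (\<lambda>m. s m $$ (i,j)) \<longlonglongrightarrow> g $$ (i,j))}"

definition coset_B :: "group_kind \<Rightarrow> nat \<Rightarrow> complex mat \<Rightarrow> complex mat set" where
  "coset_B k n g = {g * b | b. b \<in> borel k n}"

definition schubert :: "group_kind \<Rightarrow> nat \<Rightarrow> (nat \<Rightarrow> nat) \<Rightarrow> complex mat set set" where
  "schubert k n w = coset_B k n ` closure_in_grp k n (bruhat_cell k n w)"

definition hessenberg_space :: "group_kind \<Rightarrow> nat \<Rightarrow> complex mat set \<Rightarrow> bool" where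
  "hessenberg_space k n H \<longleftrightarrow> H \<subseteq> lie k n \<and> 0\<^sub>m n n \<in> H
     \<and> (\<forall>a\<in>H. \<forall>b\<in>H. a + b \<in> H) \<and> (\<forall>c. \<forall>a\<in>H. c \<cdot>\<^sub>m a \<in> H)
     \<and> (\<forall>y\<in>borel_lie k n. \<forall>h\<in>H. y * h - h * y \<in> H)"

definition hessenberg_variety :: "group_kind \<Rightarrow> nat \<Rightarrow> complex mat \<Rightarrow> complex mat set \<Rightarrow> complex mat set set" where
  "hessenberg_variety k n x H = {coset_B k n g | g. g \<in> grp k n \<and>
      (\<exists>ginv \<in> carrier_mat n n. ginv * g = 1\<^sub>m n \<and> g * ginv = 1\<^sub>m n \<and> ginv * x * g \<in> H)}"

text \<open>Pattern containment; v is a pattern in one-line notation (list), w a permutation of {0..<n}.\<close>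
definition contains_pattern :: "nat list \<Rightarrow> nat \<Rightarrow> (nat \<Rightarrow> nat) \<Rightarrow> bool" where
  "contains_pattern v n w \<longleftrightarrow> (\<exists>idx :: nat \<Rightarrow> nat.
      (\<forall>a b. a < b \<and> b < length v \<longrightarrow> idx a < idx b)
      \<and> (\<forall>a < length v. idx a < n)
      \<and> (\<forall>a < length v. \<forall>b < length v. (w (idx a) < w (idx b) \<longleftrightarrow> v ! a < v ! b)))"

definition avoids_pattern :: "nat list \<Rightarrow> nat \<Rightarrow> (nat \<Rightarrow> nat) \<Rightarrow> bool" where
  "avoids_pattern v n w \<longleftrightarrow> \<not> contains_pattern v n w"

end

theory Submission
  imports Defs
begin

text \<open>Suppose \<open>\<B>(x,H) = X\<^sub>w\<close>. Then \<open>g\<^sup>-\<^sup>1 x g \<in> H\<close> for every \<open>g\<close> in the closure of \<open>BwB\<close>, and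
  conversely \<open>g\<^sup>-\<^sup>1 x g \<in> H\<close> forces \<open>g b\<close> into that closure for some \<open>b \<in> B\<close>. Since \<open>[\<bb>,H] \<subseteq> H\<close>,
  the space \<open>H\<close> is the sum of its diagonal part and of the root spaces it contains, and these
  root spaces are closed under moving up and to the right.
  If \<open>w\<close> contains \<open>[4231]\<close> at positions \<open>p\<^sub>1 < p\<^sub>2 < p\<^sub>3 < p\<^sub>4\<close>, the fixed points \<open>w \<circ> \<sigma>\<close> of
  \<open>X\<^sub>w\<close> for \<open>\<sigma> = id, (p\<^sub>1 p\<^sub>3), (p\<^sub>2 p\<^sub>4), (p\<^sub>1 p\<^sub>3)(p\<^sub>2 p\<^sub>4)\<close> together supply enough of \<open>H\<close> to show
  that the conjugate of \<open>x\<close> by \<open>v = w \<circ> (p\<^sub>2 p\<^sub>3)\<close> lies in \<open>H\<close> as well. Hence \<open>vB \<in> X\<^sub>w\<close>,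
  although \<open>v\<close> is not below \<open>w\<close> in the Bruhat order: a minor that vanishes on \<open>BwB\<close>, and
  hence on its closure, does not vanish on \<open>vB\<close>.\<close>


section \<open>Matrix units, diagonal matrices and finite sums of matrices\<close>

lemma index_mult_mat_sum:
  fixes A B :: "'a::semiring_0 mat"
  assumes "A \<in> carrier_mat n m" "B \<in> carrier_mat m p" "i < n" "j < p"
  shows "(A * B) $$ (i,j) = (\<Sum>k<m. A $$ (i,k) * B $$ (k,j))"
  using assms by (auto simp: scalar_prod_def lessThan_atLeast0 intro!: sum.cong)

lemma index_mult3_mat_sum:
  fixes A B C :: "'a::semiring_0 mat"
  assumes A: "A \<in> carrier_mat n n" and B: "B \<in> carrier_mat n n" and C: "C \<in> carrier_mat n n"
    and i: "i < n" and j: "j < n"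
  shows "(A * B * C) $$ (i,j) = (\<Sum>k<n. \<Sum>l<n. A $$ (i,k) * B $$ (k,l) * C $$ (l,j))"
proof -
  have "(A * B * C) $$ (i,j) = (\<Sum>l<n. (A * B) $$ (i,l) * C $$ (l,j))"
    using assms by (intro index_mult_mat_sum) auto
  also have "\<dots> = (\<Sum>l<n. (\<Sum>k<n. A $$ (i,k) * B $$ (k,l)) * C $$ (l,j))"
    by (intro sum.cong refl) (use index_mult_mat_sum[OF A B i] in simp)
  also have "\<dots> = (\<Sum>l<n. \<Sum>k<n. A $$ (i,k) * B $$ (k,l) * C $$ (l,j))"
    by (simp add: sum_distrib_right)
  finally show ?thesis by (subst sum.swap)
qed

definition elem_mat :: "nat \<Rightarrow> nat \<Rightarrow> nat \<Rightarrow> 'a::{zero,one} mat" where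
  "elem_mat n a b = mat n n (\<lambda>(i,j). if i = a \<and> j = b then 1 else 0)"

lemma elem_mat_carrier [simp]: "elem_mat n a b \<in> carrier_mat n n"
  and dim_elem_mat [simp]: "dim_row (elem_mat n a b) = n" "dim_col (elem_mat n a b) = n"
  by (simp_all add: elem_mat_def)

lemma index_elem_mat [simp]:
  "i < n \<Longrightarrow> j < n \<Longrightarrow> elem_mat n a b $$ (i,j) = (if i = a \<and> j = b then 1 else 0)"
  by (simp add: elem_mat_def)

lemma elem_mat_mult:
  assumes "b < n"
  shows "elem_mat n a b * elem_mat n c d
    = (if b = c then elem_mat n a d else (0\<^sub>m n n :: 'a::semiring_1 mat))"
proof (rule eq_matI)
  fix i j
  assume "i < dim_row (if b = c then elem_mat n a d else (0\<^sub>m n n :: 'a mat))"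
    and "j < dim_col (if b = c then elem_mat n a d else (0\<^sub>m n n :: 'a mat))"
  then have i: "i < n" and j: "j < n" by (auto split: if_splits)
  have "(elem_mat n a b * elem_mat n c d :: 'a mat) $$ (i,j)
      = (\<Sum>k<n. elem_mat n a b $$ (i,k) * elem_mat n c d $$ (k,j))"
    using i j by (intro index_mult_mat_sum) auto
  also have "\<dots> = (\<Sum>k<n. if k = b then (if i = a then 1 else 0) * (if b = c \<and> j = d then 1 else 0)
      else 0)"
    using i j by (intro sum.cong) auto
  finally show "(elem_mat n a b * elem_mat n c d :: 'a mat) $$ (i,j)
      = (if b = c then elem_mat n a d else (0\<^sub>m n n :: 'a mat)) $$ (i,j)"
    using assms i j by simp
qed auto

lemma dim_mat_diag [simp]: "dim_row (mat_diag n f) = n" "dim_col (mat_diag n f) = n"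
  by (simp_all add: mat_diag_def)

lemma index_mat_diag [simp]:
  "i < n \<Longrightarrow> j < n \<Longrightarrow> mat_diag n f $$ (i,j) = (if i = j then f i else 0)"
  by (simp add: mat_diag_def)

lemma index_mat_diag_commutator:
  fixes h :: "'a::comm_ring_1 mat"
  assumes "h \<in> carrier_mat n n" "i < n" "j < n"
  shows "(mat_diag n f * h - h * mat_diag n f) $$ (i,j) = (f i - f j) * h $$ (i,j)"
  using assms by (simp add: mat_diag_mult_left[of _ n n] mat_diag_mult_right[of _ n n]
      algebra_simps)

definition mat_sum :: "nat \<Rightarrow> 'b set \<Rightarrow> ('b \<Rightarrow> 'a::comm_monoid_add mat) \<Rightarrow> 'a mat" where
  "mat_sum n F f = mat n n (\<lambda>ij. \<Sum>t\<in>F. f t $$ ij)"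

lemma mat_sum_carrier [simp]: "mat_sum n F f \<in> carrier_mat n n"
  and dim_mat_sum [simp]: "dim_row (mat_sum n F f) = n" "dim_col (mat_sum n F f) = n"
  by (simp_all add: mat_sum_def)

lemma index_mat_sum [simp]:
  "i < n \<Longrightarrow> j < n \<Longrightarrow> mat_sum n F f $$ (i,j) = (\<Sum>t\<in>F. f t $$ (i,j))"
  by (simp add: mat_sum_def)

definition diag_part :: "nat \<Rightarrow> 'a::zero mat \<Rightarrow> 'a mat" where
  "diag_part n M = mat_diag n (\<lambda>i. M $$ (i,i))"

definition offdiag_pairs :: "nat \<Rightarrow> (nat \<times> nat) set" where
  "offdiag_pairs n = {(a,b). a < n \<and> b < n \<and> a \<noteq> b}"

lemma finite_offdiag_pairs: "finite (offdiag_pairs n)"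
  by (rule finite_subset[of _ "{..<n} \<times> {..<n}"]) (auto simp: offdiag_pairs_def)

lemma index_offdiag_sum:
  fixes M :: "'a::ring_1 mat"
  assumes "i < n" "j < n"
  shows "mat_sum n (offdiag_pairs n) (\<lambda>(a,b). M $$ (a,b) \<cdot>\<^sub>m elem_mat n a b) $$ (i,j)
    = (if i = j then 0 else M $$ (i,j))"
proof -
  have "(\<Sum>t\<in>offdiag_pairs n. ((\<lambda>(a,b). M $$ (a,b) \<cdot>\<^sub>m elem_mat n a b) t) $$ (i,j))
      = (\<Sum>t\<in>offdiag_pairs n. if t = (i,j) then M $$ (i,j) else 0)"
    using assms by (intro sum.cong) (auto split: if_splits)
  then show ?thesis
    using assms finite_offdiag_pairs by (simp add: offdiag_pairs_def)
qed

lemma mtrace_mat_diag: "mtrace (mat_diag n f) = (\<Sum>i<n. f i)"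
  by (simp add: mtrace_def)

lemma borel_lieI:
  assumes "y \<in> carrier_mat n n" "upper_triangular y" "mtrace y = 0"
  shows "y \<in> borel_lie k n"
  using assms unfolding borel_lie_def lie_def by (cases k) auto

lemma elem_mat_borel_lie:
  assumes "a < b" "b < n"
  shows "elem_mat n a b \<in> borel_lie k n"
proof (rule borel_lieI)
  have "mtrace (elem_mat n a b) = (\<Sum>i<n. 0)"
    unfolding mtrace_def using assms by (intro sum.cong) auto
  then show "mtrace (elem_mat n a b) = 0" by simp
qed (use assms in \<open>auto simp: upper_triangular_def\<close>)

lemma mat_diag_borel_lie:
  assumes "(\<Sum>i<n. f i) = 0"
  shows "mat_diag n f \<in> borel_lie k n"
  using assms by (intro borel_lieI) (auto simp: upper_triangular_def mtrace_mat_diag)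

section \<open>Hessenberg spaces\<close>

locale hessenberg =
  fixes kind :: group_kind and n :: nat and H :: "complex mat set"
  assumes hessenberg_space: "hessenberg_space kind n H"
begin

lemma carrier: "h \<in> H \<Longrightarrow> h \<in> carrier_mat n n"
  and zero_mem: "0\<^sub>m n n \<in> H"
  and add_mem: "a \<in> H \<Longrightarrow> b \<in> H \<Longrightarrow> a + b \<in> H"
  and smult_mem: "a \<in> H \<Longrightarrow> c \<cdot>\<^sub>m a \<in> H"
  and commutator_mem: "y \<in> borel_lie kind n \<Longrightarrow> h \<in> H \<Longrightarrow> y * h - h * y \<in> H"
  using hessenberg_space unfolding hessenberg_space_def lie_def by auto

lemma diff_mem:
  assumes "a \<in> H" "b \<in> H"
  shows "a - b \<in> H"
proof -
  have "a - b = a + (-1) \<cdot>\<^sub>m b"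
    using carrier[OF assms(1)] carrier[OF assms(2)] by (intro eq_matI) auto
  then show ?thesis using add_mem smult_mem assms by simp
qed

lemma mat_sum_mem:
  assumes "finite F" "\<And>t. t \<in> F \<Longrightarrow> f t \<in> H"
  shows "mat_sum n F f \<in> H"
  using assms
proof (induction F rule: finite_induct)
  case empty
  have "mat_sum n {} f = 0\<^sub>m n n" by (intro eq_matI) auto
  then show ?case using zero_mem by simp
next
  case (insert t F)
  have "mat_sum n (insert t F) f = f t + mat_sum n F f"
    using insert carrier[of "f t"] by (intro eq_matI) auto
  then show ?case using insert add_mem by simp
qed

lemma funpow_diag_commutator:
  fixes f :: "nat \<Rightarrow> complex"
  defines "ad \<equiv> \<lambda>X. mat_diag n f * X - X * mat_diag n f"
  assumes D: "mat_diag n f \<in> borel_lie kind n" and h: "h \<in> H"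
  shows "(ad ^^ m) h \<in> H"
    and "i < n \<Longrightarrow> j < n \<Longrightarrow> (ad ^^ m) h $$ (i,j) = (f i - f j) ^ m * h $$ (i,j)"
proof -
  have "(ad ^^ m) h \<in> H \<and> (\<forall>i<n. \<forall>j<n. (ad ^^ m) h $$ (i,j) = (f i - f j) ^ m * h $$ (i,j))"
  proof (induction m)
    case (Suc m)
    then show ?case
      using commutator_mem[OF D] carrier
      by (simp add: ad_def index_mat_diag_commutator del: index_mult_mat)
  qed (use h in simp)
  then show "(ad ^^ m) h \<in> H" "i < n \<Longrightarrow> j < n \<Longrightarrow> (ad ^^ m) h $$ (i,j) = (f i - f j) ^ m * h $$ (i,j)"
    by auto
qed

text \<open>Commuting with \<open>D = E\<^sub>a\<^sub>a - E\<^sub>b\<^sub>b\<close> multiplies the entry \<open>(i,j)\<close> by an eigenvalue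
  in \<open>{-2,..,2}\<close>, and the value \<open>2\<close> occurs only at \<open>(a,b)\<close>. The polynomial
  \<open>p(t) = t (t - 1) (t + 1) (t + 2) / 24\<close> in \<open>ad D\<close> is therefore the projection
  onto the \<open>(a,b)\<close> entry.\<close>

lemma entry_smult_elem_mat_mem:
  assumes h: "h \<in> H" and a: "a < n" and b: "b < n" and ab: "a \<noteq> b"
  shows "h $$ (a,b) \<cdot>\<^sub>m elem_mat n a b \<in> H"
proof -
  define f where "f i = (if i = a then 1 else if i = b then -1 else (0::complex))" for i
  define ad where "ad = (\<lambda>X. mat_diag n f * X - X * mat_diag n f)"
  have "(\<Sum>i<n. f i) = (\<Sum>i<n. (if i = a then 1 else 0) + (if i = b then -1 else 0))"
    unfolding f_def using ab by (intro sum.cong) auto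
  then have D: "mat_diag n f \<in> borel_lie kind n"
    using a b by (intro mat_diag_borel_lie) (simp add: sum.distrib)
  note X = funpow_diag_commutator[OF D h, folded ad_def]
  have adh: "ad h \<in> H" using X(1)[of 1] by simp
  define R where "R = (1/24) \<cdot>\<^sub>m ((((ad ^^ 4) h + 2 \<cdot>\<^sub>m (ad ^^ 3) h) - (ad ^^ 2) h)
    - 2 \<cdot>\<^sub>m ad h)"
  have "R \<in> H"
    unfolding R_def by (intro smult_mem diff_mem add_mem X(1) adh)
  moreover have "R = h $$ (a,b) \<cdot>\<^sub>m elem_mat n a b"
  proof (rule eq_matI)
    fix i j
    assume "i < dim_row (h $$ (a,b) \<cdot>\<^sub>m elem_mat n a b)"
      and "j < dim_col (h $$ (a,b) \<cdot>\<^sub>m elem_mat n a b)"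
    then have i: "i < n" and j: "j < n" by auto
    have p: "((f i - f j)^4 + 2 * (f i - f j)^3 - (f i - f j)^2 - 2 * (f i - f j)) / 24
        = (if i = a \<and> j = b then 1 else 0)"
      unfolding f_def using ab by (auto simp: power2_eq_square power3_eq_cube power4_eq_xxxx)
    have X1: "ad h $$ (i,j) = (f i - f j) * h $$ (i,j)"
      using X(2)[OF i j, of 1] by simp
    have "R $$ (i,j) = ((f i - f j)^4 + 2 * (f i - f j)^3 - (f i - f j)^2 - 2 * (f i - f j))
        / 24 * h $$ (i,j)"
      using i j carrier_matD[OF carrier[OF X(1)]] carrier_matD[OF carrier[OF adh]]
      by (simp add: R_def X(2)[OF i j] X1 field_simps)
    then show "R $$ (i,j) = (h $$ (a,b) \<cdot>\<^sub>m elem_mat n a b) $$ (i,j)"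
      using i j p by auto
  qed (use carrier[OF X(1)] carrier[OF adh] in \<open>auto simp: R_def\<close>)
  ultimately show ?thesis by simp
qed

lemma elem_mat_mem_if_entry:
  assumes "h \<in> H" "a < n" "b < n" "a \<noteq> b" "h $$ (a,b) \<noteq> 0"
  shows "elem_mat n a b \<in> H"
proof -
  have "(1 / h $$ (a,b)) \<cdot>\<^sub>m (h $$ (a,b) \<cdot>\<^sub>m elem_mat n a b) \<in> H"
    using entry_smult_elem_mat_mem assms smult_mem by blast
  moreover have "(1 / h $$ (a,b)) \<cdot>\<^sub>m (h $$ (a,b) \<cdot>\<^sub>m elem_mat n a b) = elem_mat n a b"
    using assms(5) by (intro eq_matI) auto
  ultimately show ?thesis by simp
qed

lemma elem_mat_mem_row_up:
  assumes E: "elem_mat n i j \<in> H" and "i < n" "j < n" "k < i" "k \<noteq> j"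
  shows "elem_mat n k j \<in> H"
proof -
  have "elem_mat n k i * elem_mat n i j - elem_mat n i j * elem_mat n k i \<in> H"
    using assms by (intro commutator_mem[OF elem_mat_borel_lie E]) auto
  moreover have "elem_mat n k i * elem_mat n i j - elem_mat n i j * elem_mat n k i
      = (elem_mat n k j :: complex mat)"
    using assms by (simp add: elem_mat_mult) (intro eq_matI, auto)
  ultimately show ?thesis by simp
qed

lemma elem_mat_mem_col_right:
  assumes E: "elem_mat n i j \<in> H" and "i < n" "l < n" "j < l" "l \<noteq> i"
  shows "elem_mat n i l \<in> H"
proof -
  have "(-1) \<cdot>\<^sub>m (elem_mat n j l * elem_mat n i j - elem_mat n i j * elem_mat n j l) \<in> H"
    using assms by (intro smult_mem commutator_mem[OF elem_mat_borel_lie E]) auto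
  moreover have "(-1) \<cdot>\<^sub>m (elem_mat n j l * elem_mat n i j - elem_mat n i j * elem_mat n j l)
      = (elem_mat n i l :: complex mat)"
    using assms by (simp add: elem_mat_mult) (intro eq_matI, auto)
  ultimately show ?thesis by simp
qed

lemma diag_elem_mat_diff_mem:
  assumes E: "elem_mat n i j \<in> H" and "i < n" "j < i"
  shows "elem_mat n j j - elem_mat n i i \<in> H"
proof -
  have "elem_mat n j i * elem_mat n i j - elem_mat n i j * elem_mat n j i \<in> H"
    using assms by (intro commutator_mem[OF elem_mat_borel_lie E]) auto
  then show ?thesis using assms by (simp add: elem_mat_mult)
qed

lemma elem_mat_mem_transpose:
  assumes E: "elem_mat n i j \<in> H" and i: "i < n" and ji: "j < i"
  shows "elem_mat n j i \<in> H"
proof -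
  define f where "f r = (if r = j then 1 else if r = i then -1 else (0::complex))" for r
  have D: "mat_diag n f = elem_mat n j j - elem_mat n i i"
    using assms by (intro eq_matI) (auto simp: f_def)
  have "(-1/2) \<cdot>\<^sub>m (elem_mat n j i * mat_diag n f - mat_diag n f * elem_mat n j i) \<in> H"
    unfolding D using assms
    by (intro smult_mem commutator_mem[OF elem_mat_borel_lie] diag_elem_mat_diff_mem) auto
  moreover have "(-1/2) \<cdot>\<^sub>m (elem_mat n j i * mat_diag n f - mat_diag n f * elem_mat n j i)
      = elem_mat n j i"
  proof (rule eq_matI)
    fix a b
    assume "a < dim_row (elem_mat n j i :: complex mat)" "b < dim_col (elem_mat n j i :: complex mat)"
    then have a: "a < n" and b: "b < n" by auto
    have "(elem_mat n j i * mat_diag n f - mat_diag n f * elem_mat n j i) $$ (a,b)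
        = - ((mat_diag n f * elem_mat n j i - elem_mat n j i * mat_diag n f) $$ (a,b))"
      using a b by simp
    also have "\<dots> = - ((f a - f b) * elem_mat n j i $$ (a,b))"
      using a b by (simp only: index_mat_diag_commutator[OF elem_mat_carrier])
    finally show "((-1/2) \<cdot>\<^sub>m (elem_mat n j i * mat_diag n f - mat_diag n f * elem_mat n j i))
        $$ (a,b) = elem_mat n j i $$ (a,b)"
      using a b ji by (auto simp: f_def)
  qed auto
  ultimately show ?thesis by simp
qed

lemma elem_mat_mem_mono:
  assumes E: "elem_mat n i j \<in> H" and "i < n" "j < n" "i \<noteq> j" "k \<le> i" "j \<le> l" "l < n"
    "k \<noteq> l"
  shows "elem_mat n k l \<in> H"
proof (cases "k = j")
  case False
  then have "elem_mat n k j \<in> H"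
    using elem_mat_mem_row_up[OF E] assms by (cases "k = i") auto
  then show ?thesis
    using elem_mat_mem_col_right[of k j l] assms by (cases "l = j") auto
next
  case True
  show ?thesis
  proof (cases "l = i")
    case False
    then have "elem_mat n i l \<in> H"
      using elem_mat_mem_col_right[OF E] assms \<open>k = j\<close> by auto
    then show ?thesis
      using elem_mat_mem_row_up[of i l k] assms by (cases "k = i") auto
  next
    case True
    then show ?thesis using elem_mat_mem_transpose[OF E] assms \<open>k = j\<close> by auto
  qed
qed

lemma diag_elem_mat_diff_mem_between:
  assumes E: "elem_mat n i j \<in> H" and "i < n" "j < r" "r \<le> i"
  shows "elem_mat n r r - elem_mat n j j \<in> H"
proof -
  have "elem_mat n j j - elem_mat n r r \<in> H"
    using assms by (intro diag_elem_mat_diff_mem elem_mat_mem_mono[OF E]) auto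
  then have "(-1) \<cdot>\<^sub>m (elem_mat n j j - elem_mat n r r) \<in> H" by (rule smult_mem)
  moreover have "(-1) \<cdot>\<^sub>m (elem_mat n j j - elem_mat n r r)
      = (elem_mat n r r - elem_mat n j j :: complex mat)"
    by (intro eq_matI) auto
  ultimately show ?thesis by simp
qed

lemma offdiag_sum_mem:
  assumes "\<And>a b. a < n \<Longrightarrow> b < n \<Longrightarrow> a \<noteq> b \<Longrightarrow> M $$ (a,b) \<noteq> 0 \<Longrightarrow> elem_mat n a b \<in> H"
  shows "mat_sum n (offdiag_pairs n) (\<lambda>(a,b). M $$ (a,b) \<cdot>\<^sub>m elem_mat n a b) \<in> H"
proof (intro mat_sum_mem finite_offdiag_pairs)
  fix t
  assume "t \<in> offdiag_pairs n"
  then obtain a b where t: "t = (a,b)" "a < n" "b < n" "a \<noteq> b"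
    by (auto simp: offdiag_pairs_def)
  show "(\<lambda>(a,b). M $$ (a,b) \<cdot>\<^sub>m elem_mat n a b) t \<in> H"
  proof (cases "M $$ (a,b) = 0")
    case True
    then have "M $$ (a,b) \<cdot>\<^sub>m elem_mat n a b = 0\<^sub>m n n" by (intro eq_matI) auto
    then show ?thesis using t zero_mem by simp
  qed (use t assms smult_mem in auto)
qed

lemma diag_part_mem:
  assumes h: "h \<in> H"
  shows "diag_part n h \<in> H"
proof -
  have "h - mat_sum n (offdiag_pairs n) (\<lambda>(a,b). h $$ (a,b) \<cdot>\<^sub>m elem_mat n a b) \<in> H"
    by (intro diff_mem h offdiag_sum_mem elem_mat_mem_if_entry[OF h])
  moreover have "h - mat_sum n (offdiag_pairs n) (\<lambda>(a,b). h $$ (a,b) \<cdot>\<^sub>m elem_mat n a b)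
      = diag_part n h"
    using carrier[OF h] by (intro eq_matI) (auto simp: diag_part_def index_offdiag_sum simp del: index_mat_sum)
  ultimately show ?thesis by simp
qed

lemma mem_if_offdiag_support_and_diag_part:
  assumes M: "M \<in> carrier_mat n n"
    and support: "\<And>a b. a < n \<Longrightarrow> b < n \<Longrightarrow> a \<noteq> b \<Longrightarrow> M $$ (a,b) \<noteq> 0 \<Longrightarrow> elem_mat n a b \<in> H"
    and diag: "diag_part n M \<in> H"
  shows "M \<in> H"
proof -
  have "diag_part n M + mat_sum n (offdiag_pairs n) (\<lambda>(a,b). M $$ (a,b) \<cdot>\<^sub>m elem_mat n a b) \<in> H"
    by (intro add_mem diag offdiag_sum_mem support)
  moreover have "diag_part n M + mat_sum n (offdiag_pairs n) (\<lambda>(a,b). M $$ (a,b) \<cdot>\<^sub>m elem_mat n a b)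
      = M"
    using M by (intro eq_matI) (auto simp: diag_part_def index_offdiag_sum simp del: index_mat_sum)
  ultimately show ?thesis by simp
qed

end

lemma upper_triangular_inverse_diag:
  fixes b b' :: "'a::comm_ring_1 mat"
  assumes b: "b \<in> carrier_mat n n" and b': "b' \<in> carrier_mat n n"
    and ub: "upper_triangular b" and ub': "upper_triangular b'"
    and inv: "b * b' = 1\<^sub>m n" and s: "s < n"
  shows "b $$ (s,s) * b' $$ (s,s) = 1"
proof -
  have "(b * b') $$ (s,s) = (\<Sum>i<n. b $$ (s,i) * b' $$ (i,s))"
    using b b' s by (intro index_mult_mat_sum) auto
  also have "\<dots> = (\<Sum>i<n. if i = s then b $$ (s,s) * b' $$ (s,s) else 0)"
    using upper_triangularD[OF ub] upper_triangularD[OF ub'] b b' s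
    by (intro sum.cong refl) (auto simp: nat_neq_iff)
  finally show ?thesis using inv s by simp
qed

lemma index_diag_conj_upper_triangular:
  fixes b b' h :: "'a::comm_ring_1 mat"
  assumes b: "b \<in> carrier_mat n n" and b': "b' \<in> carrier_mat n n" and h: "h \<in> carrier_mat n n"
    and ub: "upper_triangular b" and ub': "upper_triangular b'" and inv: "b * b' = 1\<^sub>m n"
    and s: "s < n"
  shows "(b * h * b') $$ (s,s)
    = h $$ (s,s) + (\<Sum>i<n. \<Sum>j<n. if j < i then h $$ (i,j) * (b $$ (s,i) * b' $$ (j,s)) else 0)"
proof -
  have summand: "b $$ (s,i) * h $$ (i,j) * b' $$ (j,s) = (if j < i then h $$ (i,j) * (b $$ (s,i) * b' $$ (j,s))
      else 0) + (if j = s then if i = s then h $$ (s,s) else 0 else 0)" if "i < n" "j < n" for i j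
  proof (cases "j < i")
    case False
    consider "i < s" | "s < j" | "i = s" "j = s" using False by linarith
    then show ?thesis
    proof cases
      case 1
      then show ?thesis using upper_triangularD[OF ub 1] b s False by auto
    next
      case 2
      then show ?thesis using upper_triangularD[OF ub' 2] b' \<open>j < n\<close> False by auto
    next
      case 3
      have "b $$ (s,s) * h $$ (s,s) * b' $$ (s,s) = h $$ (s,s) * (b $$ (s,s) * b' $$ (s,s))"
        by (simp add: ac_simps)
      then show ?thesis using 3 upper_triangular_inverse_diag[OF b b' ub ub' inv s] by simp
    qed
  qed (simp add: ac_simps)
  have "(b * h * b') $$ (s,s) = (\<Sum>i<n. \<Sum>j<n. b $$ (s,i) * h $$ (i,j) * b' $$ (j,s))"
    by (rule index_mult3_mat_sum[OF b h b' s s])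
  also have "\<dots> = (\<Sum>i<n. \<Sum>j<n. if j < i then h $$ (i,j) * (b $$ (s,i) * b' $$ (j,s)) else 0)
      + h $$ (s,s)"
    using s by (simp add: summand sum.distrib)
  finally show ?thesis by (simp add: add.commute)
qed

lemma diag_part_conj_upper_triangular:
  fixes b b' h :: "'a::comm_ring_1 mat"
  assumes b: "b \<in> carrier_mat n n" and b': "b' \<in> carrier_mat n n" and h: "h \<in> carrier_mat n n"
    and ub: "upper_triangular b" and ub': "upper_triangular b'" and inv: "b * b' = 1\<^sub>m n"
  shows "diag_part n (b * h * b') = diag_part n h + mat_sum n ({..<n} \<times> {..<n})
    (\<lambda>(i,j). if j < i then h $$ (i,j) \<cdot>\<^sub>m mat_diag n (\<lambda>s. b $$ (s,i) * b' $$ (j,s)) else 0\<^sub>m n n)"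
    (is "_ = _ + mat_sum n _ ?F")
proof (rule eq_matI)
  fix s t
  assume "s < dim_row (diag_part n h + mat_sum n ({..<n} \<times> {..<n}) ?F)"
    and "t < dim_col (diag_part n h + mat_sum n ({..<n} \<times> {..<n}) ?F)"
  then have s: "s < n" and t: "t < n" by (auto simp: diag_part_def)
  show "diag_part n (b * h * b') $$ (s,t) = (diag_part n h + mat_sum n ({..<n} \<times> {..<n}) ?F) $$ (s,t)"
  proof (cases "s = t")
    case True
    have "(\<Sum>i<n. \<Sum>j<n. if j < i then h $$ (i,j) * (b $$ (s,i) * b' $$ (j,s)) else 0)
        = (\<Sum>p\<in>{..<n} \<times> {..<n}. ?F p $$ (s,s))"
      unfolding sum.cartesian_product using s by (intro sum.cong refl) auto
    then show ?thesis
      using True s index_diag_conj_upper_triangular[OF b b' h ub ub' inv s]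
      by (simp add: diag_part_def del: index_mult_mat)
  qed (use s t in \<open>auto simp: diag_part_def intro!: sum.neutral\<close>)
qed (auto simp: diag_part_def)

context hessenberg
begin

lemma elem_mat_mem_if_diag_entries_differ:
  assumes h: "h \<in> H" and ij: "i < j" "j < n" and ne: "h $$ (i,i) \<noteq> h $$ (j,j)"
  shows "elem_mat n i j \<in> H"
proof (rule elem_mat_mem_if_entry)
  show "elem_mat n i j * diag_part n h - diag_part n h * elem_mat n i j \<in> H"
    using ij by (intro commutator_mem elem_mat_borel_lie diag_part_mem h)
  show "(elem_mat n i j * diag_part n h - diag_part n h * elem_mat n i j) $$ (i,j) \<noteq> 0"
    using ij ne by (simp add: diag_part_def mat_diag_mult_left[of _ n n] mat_diag_mult_right[of _ n n])
qed (use ij in auto)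

text \<open>If \<open>E\<^sub>k\<^sub>l \<notin> H\<close>, then \<open>h\<close> vanishes off the diagonal and is constant on the diagonal
  within the block \<open>[k,l] \<times> [k,l]\<close>, so \<open>(b h b\<^sup>-\<^sup>1)\<^sub>k\<^sub>l = h\<^sub>k\<^sub>k (b b\<^sup>-\<^sup>1)\<^sub>k\<^sub>l = 0\<close>.\<close>

lemma elem_mat_mem_if_conj_entry:
  assumes b: "b \<in> carrier_mat n n" and b': "b' \<in> carrier_mat n n"
    and ub: "upper_triangular b" and ub': "upper_triangular b'" and inv: "b * b' = 1\<^sub>m n"
    and h: "h \<in> H" and k: "k < n" and l: "l < n" and kl: "k \<noteq> l"
    and nz: "(b * h * b') $$ (k,l) \<noteq> 0"
  shows "elem_mat n k l \<in> H"
proof (rule ccontr)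
  assume notin: "elem_mat n k l \<notin> H"
  have offdiag: "h $$ (i,j) = 0" if "k \<le> i" "j \<le> l" "i < n" "j < n" "i \<noteq> j" for i j
  proof (rule ccontr)
    assume "h $$ (i,j) \<noteq> 0"
    then have "elem_mat n i j \<in> H" using that by (intro elem_mat_mem_if_entry[OF h]) auto
    then show False using that notin elem_mat_mem_mono[of i j k l] l kl by auto
  qed
  have diag: "h $$ (i,i) = h $$ (k,k)" if "k \<le> i" "i \<le> l" for i
  proof (rule ccontr)
    assume ne: "h $$ (i,i) \<noteq> h $$ (k,k)"
    then have "k < i" using that by (metis order_le_less)
    then have "elem_mat n k i \<in> H"
      using ne that l by (intro elem_mat_mem_if_diag_entries_differ[OF h]) auto
    then show False
      using that notin elem_mat_mem_mono[of k i k l] k l kl \<open>k < i\<close> by auto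
  qed
  have summand: "b $$ (k,i) * h $$ (i,j) * b' $$ (j,l)
      = (if i = j then h $$ (k,k) * (b $$ (k,i) * b' $$ (i,l)) else 0)" if i: "i < n" and j: "j < n" for i j
  proof (cases "b $$ (k,i) = 0 \<or> b' $$ (j,l) = 0")
    case False
    have "k \<le> i"
      using False upper_triangularD[OF ub, of i k] b k by (cases "i < k") auto
    moreover have "j \<le> l"
      using False upper_triangularD[OF ub', of l j] b' j by (cases "l < j") auto
    ultimately show ?thesis
    proof (cases "i = j")
      case True
      then show ?thesis using diag[of i] \<open>k \<le> i\<close> \<open>j \<le> l\<close> by simp
    qed (simp add: offdiag i j)
  qed auto
  have "(b * h * b') $$ (k,l) = (\<Sum>i<n. \<Sum>j<n. if i = j then h $$ (k,k) * (b $$ (k,i) * b' $$ (i,l)) else 0)"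
    using summand by (simp add: index_mult3_mat_sum[OF b carrier[OF h] b' k l])
  also have "\<dots> = h $$ (k,k) * (b * b') $$ (k,l)"
    using b b' k l by (simp add: index_mult_mat_sum[of _ n n] sum_distrib_left del: index_mult_mat)
  finally show False using nz inv k l kl by simp
qed

lemma mat_diag_mem_if_supported_between:
  assumes E: "elem_mat n i j \<in> H" and i: "i < n" and ji: "j < i"
    and sum: "(\<Sum>r<n. c r) = 0" and supp: "\<And>r. r < n \<Longrightarrow> c r \<noteq> 0 \<Longrightarrow> j \<le> r \<and> r \<le> i"
  shows "mat_diag n c \<in> H"
proof -
  have "mat_sum n {..<n} (\<lambda>r. c r \<cdot>\<^sub>m (elem_mat n r r - elem_mat n j j)) \<in> H"
  proof (intro mat_sum_mem)
    fix r
    assume "r \<in> {..<n}"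
    then consider "c r = 0 \<or> r = j" | "j < r" "r \<le> i"
      using supp by (auto simp: le_less)
    then show "c r \<cdot>\<^sub>m (elem_mat n r r - elem_mat n j j) \<in> H"
    proof cases
      case 1
      then have "c r \<cdot>\<^sub>m (elem_mat n r r - elem_mat n j j) = 0\<^sub>m n n" by (intro eq_matI) auto
      then show ?thesis using zero_mem by simp
    qed (intro smult_mem diag_elem_mat_diff_mem_between[OF E i]; simp)
  qed simp
  moreover have "mat_sum n {..<n} (\<lambda>r. c r \<cdot>\<^sub>m (elem_mat n r r - elem_mat n j j)) = mat_diag n c"
  proof (rule eq_matI)
    fix s t
    assume "s < dim_row (mat_diag n c)" "t < dim_col (mat_diag n c)"
    then have s: "s < n" and t: "t < n" by auto
    have "(\<Sum>r<n. (c r \<cdot>\<^sub>m (elem_mat n r r - elem_mat n j j)) $$ (s,t))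
        = (\<Sum>r<n. (if r = s \<and> s = t then c r else 0) - (if s = j \<and> t = j then 1 else 0) * c r)"
      using s t by (intro sum.cong) auto
    also have "\<dots> = (if s = t then c s else 0) - (if s = j \<and> t = j then 1 else 0) * (\<Sum>r<n. c r)"
      using s by (simp add: sum_subtractf sum_distrib_left)
    also have "\<dots> = (if s = t then c s else 0)"
      using sum by simp
    finally show "mat_sum n {..<n} (\<lambda>r. c r \<cdot>\<^sub>m (elem_mat n r r - elem_mat n j j)) $$ (s,t)
        = mat_diag n c $$ (s,t)"
      using s t by simp
  qed auto
  ultimately show ?thesis by simp
qed

lemma conj_upper_triangular_mem:
  assumes b: "b \<in> carrier_mat n n" and b': "b' \<in> carrier_mat n n"
    and ub: "upper_triangular b" and ub': "upper_triangular b'"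
    and bb': "b * b' = 1\<^sub>m n" and b'b: "b' * b = 1\<^sub>m n" and h: "h \<in> H"
  shows "b * h * b' \<in> H"
proof (rule mem_if_offdiag_support_and_diag_part)
  show "b * h * b' \<in> carrier_mat n n" using b b' carrier[OF h] by auto
  show "elem_mat n k l \<in> H" if "k < n" "l < n" "k \<noteq> l" "(b * h * b') $$ (k,l) \<noteq> 0" for k l
    using elem_mat_mem_if_conj_entry[OF b b' ub ub' bb' h] that by blast
  have "h $$ (i,j) \<cdot>\<^sub>m mat_diag n (\<lambda>s. b $$ (s,i) * b' $$ (j,s)) \<in> H"
    if i: "i < n" and j: "j < n" and ji: "j < i" for i j
  proof (cases "h $$ (i,j) = 0")
    case True
    then have "h $$ (i,j) \<cdot>\<^sub>m mat_diag n (\<lambda>s. b $$ (s,i) * b' $$ (j,s)) = 0\<^sub>m n n"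
      by (intro eq_matI) auto
    then show ?thesis using zero_mem by simp
  next
    case False
    have "(\<Sum>s<n. b $$ (s,i) * b' $$ (j,s)) = (b' * b) $$ (j,i)"
      using b b' i j by (simp add: index_mult_mat_sum[of _ n n] mult.commute del: index_mult_mat)
    then have "(\<Sum>s<n. b $$ (s,i) * b' $$ (j,s)) = 0" using b'b i j ji by simp
    moreover have "j \<le> s \<and> s \<le> i" if "s < n" "b $$ (s,i) * b' $$ (j,s) \<noteq> 0" for s
      using that upper_triangularD[OF ub, of i s] upper_triangularD[OF ub', of s j] b b' j
      by (cases "i < s"; cases "s < j") auto
    moreover have E: "elem_mat n i j \<in> H"
      using False i j ji by (intro elem_mat_mem_if_entry[OF h]) auto
    ultimately show ?thesis
      using i ji by (intro smult_mem mat_diag_mem_if_supported_between[OF E]) auto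
  qed
  then show "diag_part n (b * h * b') \<in> H"
    unfolding diag_part_conj_upper_triangular[OF b b' carrier[OF h] ub ub' bb']
    by (intro add_mem diag_part_mem[OF h] mat_sum_mem) (auto simp: zero_mem)
qed

end

section \<open>Monomial matrices and the Borel subgroup\<close>

definition monomial_mat :: "nat \<Rightarrow> (nat \<Rightarrow> nat) \<Rightarrow> (nat \<Rightarrow> 'a::field) \<Rightarrow> 'a mat" where
  "monomial_mat n u s = mat n n (\<lambda>(i,j). if i = u j then s j else 0)"

definition monomial_mat_inv :: "nat \<Rightarrow> (nat \<Rightarrow> nat) \<Rightarrow> (nat \<Rightarrow> 'a::field) \<Rightarrow> 'a mat" where
  "monomial_mat_inv n u s = mat n n (\<lambda>(i,j). if j = u i then 1 / s i else 0)"

lemma monomial_mat_carrier [simp]: "monomial_mat n u s \<in> carrier_mat n n"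
  and dim_monomial_mat [simp]: "dim_row (monomial_mat n u s) = n" "dim_col (monomial_mat n u s) = n"
  and monomial_mat_inv_carrier [simp]: "monomial_mat_inv n u s \<in> carrier_mat n n"
  and dim_monomial_mat_inv [simp]:
    "dim_row (monomial_mat_inv n u s) = n" "dim_col (monomial_mat_inv n u s) = n"
  by (simp_all add: monomial_mat_def monomial_mat_inv_def)

lemma index_monomial_mat [simp]:
  "i < n \<Longrightarrow> j < n \<Longrightarrow> monomial_mat n u s $$ (i,j) = (if i = u j then s j else 0)"
  and index_monomial_mat_inv [simp]:
  "i < n \<Longrightarrow> j < n \<Longrightarrow> monomial_mat_inv n u s $$ (i,j) = (if j = u i then 1 / s i else 0)"
  by (simp_all add: monomial_mat_def monomial_mat_inv_def)

lemma permutes_less: "u permutes {..<(n::nat)} \<Longrightarrow> i < n \<Longrightarrow> u i < n"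
  using permutes_in_image by fastforce

lemma monomial_mat_inv_mult:
  assumes u: "u permutes {..<n}" and s: "\<And>j. j < n \<Longrightarrow> s j \<noteq> 0"
  shows "monomial_mat_inv n u s * monomial_mat n u s = 1\<^sub>m n"
proof (rule eq_matI)
  fix a b
  assume "a < dim_row (1\<^sub>m n :: 'a mat)" "b < dim_col (1\<^sub>m n :: 'a mat)"
  then have a: "a < n" and b: "b < n" by auto
  have "(monomial_mat_inv n u s * monomial_mat n u s) $$ (a,b)
      = (\<Sum>r<n. monomial_mat_inv n u s $$ (a,r) * monomial_mat n u s $$ (r,b))"
    using a b by (intro index_mult_mat_sum) auto
  also have "\<dots> = (\<Sum>r<n. if r = u a then 1 / s a * (if u a = u b then s b else 0) else 0)"
    using a b by (intro sum.cong) auto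
  finally show "(monomial_mat_inv n u s * monomial_mat n u s) $$ (a,b) = 1\<^sub>m n $$ (a,b)"
    using a b s[OF a] permutes_less[OF u a] permutes_inj[OF u] by (auto dest: injD)
qed auto

lemma monomial_mat_mult_inv:
  assumes "u permutes {..<n}" and "\<And>j. j < n \<Longrightarrow> s j \<noteq> 0"
  shows "monomial_mat n u s * monomial_mat_inv n u s = 1\<^sub>m n"
  by (rule mat_mult_left_right_inverse[OF _ _ monomial_mat_inv_mult[OF assms]]) auto

lemma index_conj_monomial_mat:
  assumes u: "u permutes {..<n}" and x: "x \<in> carrier_mat n n" and i: "i < n" and j: "j < n"
  shows "(monomial_mat_inv n u s * x * monomial_mat n u s) $$ (i,j) = x $$ (u i, u j) * s j / s i"
proof -
  have "(monomial_mat_inv n u s * x * monomial_mat n u s) $$ (i,j)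
      = (\<Sum>a<n. \<Sum>b<n. monomial_mat_inv n u s $$ (i,a) * x $$ (a,b) * monomial_mat n u s $$ (b,j))"
    using x i j by (intro index_mult3_mat_sum) auto
  also have "\<dots> = (\<Sum>a<n. \<Sum>b<n. if b = u j then if a = u i then x $$ (u i, u j) * s j / s i
      else 0 else 0)"
    using i j by (intro sum.cong refl) auto
  also have "\<dots> = x $$ (u i, u j) * s j / s i"
    using permutes_less[OF u i] permutes_less[OF u j] by simp
  finally show ?thesis .
qed

lemma index_mult_monomial_mat:
  assumes u: "u permutes {..<n}" and A: "A \<in> carrier_mat n n" and i: "i < n" and t: "t < n"
  shows "(A * monomial_mat n u s) $$ (i,t) = A $$ (i, u t) * s t"
proof -
  have "(A * monomial_mat n u s) $$ (i,t) = (\<Sum>r<n. A $$ (i,r) * monomial_mat n u s $$ (r,t))"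
    using A i t by (intro index_mult_mat_sum) auto
  also have "\<dots> = (\<Sum>r<n. if r = u t then A $$ (i, u t) * s t else 0)"
    using t by (intro sum.cong) auto
  finally show ?thesis using permutes_less[OF u t] by simp
qed

lemma smult_perm_mat: "c \<cdot>\<^sub>m perm_mat n w = monomial_mat n w (\<lambda>_. c)"
  by (intro eq_matI) (auto simp: perm_mat_def)

lemma det_perm_mat_nonzero:
  assumes u: "u permutes {..<n}"
  shows "det (perm_mat n u) \<noteq> 0"
proof -
  have "monomial_mat n u (\<lambda>_. 1) * monomial_mat_inv n u (\<lambda>_. 1) = (1\<^sub>m n :: complex mat)"
    by (rule monomial_mat_mult_inv[OF u]) auto
  then have "det (monomial_mat n u (\<lambda>_. 1)) * det (monomial_mat_inv n u (\<lambda>_. 1 :: complex)) = 1"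
    by (metis det_mult[OF monomial_mat_carrier monomial_mat_inv_carrier] det_one)
  moreover have "perm_mat n u = monomial_mat n u (\<lambda>_. 1)"
    by (intro eq_matI) (auto simp: perm_mat_def)
  ultimately show ?thesis by auto
qed

lemma scaled_perm_mat_mem_grp:
  assumes u: "u permutes {..<n}" and n: "n > 0"
  obtains c where "c \<noteq> 0" "c \<cdot>\<^sub>m perm_mat n u \<in> grp k n"
proof -
  have d: "det (perm_mat n u) \<noteq> 0" by (rule det_perm_mat_nonzero[OF u])
  then obtain c :: complex where c: "c ^ n = 1 / det (perm_mat n u)"
    using bij_betw_apply[OF bij_betw_nth_root_unity[OF _ n], of "1 / det (perm_mat n u)" 1] by auto
  then have "c \<noteq> 0" using d n by (auto simp: power_0_left)
  moreover have "det (c \<cdot>\<^sub>m perm_mat n u) = 1"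
    using c d by (simp add: perm_mat_def det_smult)
  moreover have "c \<cdot>\<^sub>m perm_mat n u \<in> carrier_mat n n" by (simp add: perm_mat_def)
  ultimately show ?thesis
    using that d unfolding grp_def by (cases k) auto
qed

lemma det_upper_triangular_prod:
  assumes "upper_triangular A" "A \<in> carrier_mat n n"
  shows "det A = (\<Prod>i<n. A $$ (i,i))"
  using det_upper_triangular[OF assms] assms by (simp add: prod_list_diag_prod atLeast0LessThan)

lemma one_mem_borel: "1\<^sub>m n \<in> borel k n"
  unfolding borel_def grp_def by (cases k) auto

lemma borelD:
  assumes "b \<in> borel k n"
  shows "b \<in> carrier_mat n n" "upper_triangular b" "det b \<noteq> 0"
  using assms unfolding borel_def grp_def by (cases k; auto)+

lemma borelI:
  assumes "b \<in> carrier_mat n n" "upper_triangular b" "det b = 1"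
  shows "b \<in> borel k n"
  using assms unfolding borel_def grp_def by (cases k) auto

lemma upper_triangular_mult:
  fixes A B :: "'a::semiring_0 mat"
  assumes A: "A \<in> carrier_mat n n" and B: "B \<in> carrier_mat n n"
    and "upper_triangular A" "upper_triangular B"
  shows "upper_triangular (A * B)"
proof
  fix i j
  assume ji: "j < i" and "i < dim_row (A * B)"
  then have i: "i < n" using A by simp
  have "A $$ (i,k) * B $$ (k,j) = 0" if "k < n" for k
    using upper_triangularD[OF assms(3), of k i] upper_triangularD[OF assms(4), of j k] A B i ji that
    by (cases "k < i") auto
  then show "(A * B) $$ (i,j) = 0"
    using A B i ji by (simp add: index_mult_mat_sum[of _ n n] del: index_mult_mat)
qed

lemma mult_mem_borel:
  assumes "a \<in> borel k n" "b \<in> borel k n"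
  shows "a * b \<in> borel k n"
  using assms borelD[OF assms(1)] borelD[OF assms(2)] upper_triangular_mult[of a n b]
  unfolding borel_def grp_def by (cases k) (auto simp: det_mult)

lemma bruhat_cell_carrier:
  assumes "g \<in> bruhat_cell k n w"
  shows "g \<in> carrier_mat n n"
proof -
  obtain b1 b2 c where "b1 \<in> borel k n" "b2 \<in> borel k n" "g = b1 * (c \<cdot>\<^sub>m perm_mat n w) * b2"
    using assms unfolding bruhat_cell_def by blast
  then show ?thesis
    using borelD(1) by (auto simp: perm_mat_def intro!: mult_carrier_mat[of _ n n _ n])
qed

lemma mult_bruhat_cell:
  assumes "b \<in> borel k n" "g \<in> bruhat_cell k n w"
  shows "b * g \<in> bruhat_cell k n w"
proof -
  obtain b1 b2 c where b: "b1 \<in> borel k n" "b2 \<in> borel k n" "c \<cdot>\<^sub>m perm_mat n w \<in> grp k n"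
    and g: "g = b1 * (c \<cdot>\<^sub>m perm_mat n w) * b2"
    using assms(2) unfolding bruhat_cell_def by blast
  have "b * g = (b * b1) * (c \<cdot>\<^sub>m perm_mat n w) * b2"
    using borelD(1)[OF assms(1)] borelD(1)[OF b(1)] borelD(1)[OF b(2)]
    by (simp add: g perm_mat_def assoc_mult_mat[of _ n n _ n _ n])
  then show ?thesis
    unfolding bruhat_cell_def using b mult_mem_borel[OF assms(1) b(1)] by blast
qed

lemma tendsto_det:
  assumes A: "\<And>m. A m \<in> carrier_mat n n" and B: "B \<in> carrier_mat n n"
    and conv: "\<And>i j. i < n \<Longrightarrow> j < n \<Longrightarrow> (\<lambda>m. A m $$ (i,j)) \<longlonglongrightarrow> B $$ (i,j)"
  shows "(\<lambda>m. det (A m)) \<longlonglongrightarrow> (det B :: complex)"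
proof -
  have "(\<lambda>m. \<Sum>p \<in> {p. p permutes {0..<n}}. signof p * (\<Prod>i = 0..<n. A m $$ (i, p i)))
      \<longlonglongrightarrow> (\<Sum>p \<in> {p. p permutes {0..<n}}. signof p * (\<Prod>i = 0..<n. B $$ (i, p i)))"
    by (intro tendsto_sum tendsto_mult_left tendsto_prod conv) (auto simp: permutes_in_image)
  then show ?thesis using det_def'[OF A] det_def'[OF B] by presburger
qed

section \<open>Degenerating a Bruhat cell to a smaller permutation\<close>

text \<open>Let \<open>\<tau>\<close> be an involution such that each of its transpositions \<open>(p, \<tau> p)\<close> is an
  inversion of \<open>w\<close>. Column operations by \<open>degen_right\<close> and row operations by \<open>degen_left\<close>
  turn the monomial matrix of \<open>w\<close> into the signed monomial matrix of \<open>w \<circ> \<tau>\<close> up to a term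
  of order \<open>e\<close>; letting \<open>e \<rightarrow> 0\<close> puts the latter into the closure of the cell.\<close>

definition degen_left :: "nat \<Rightarrow> (nat \<Rightarrow> nat) \<Rightarrow> (nat \<Rightarrow> nat) \<Rightarrow> complex \<Rightarrow> complex mat" where
  "degen_left n w \<tau> e = mat n n (\<lambda>(i,r). if i = r then 1
     else if i < r \<and> r = w (\<tau> (Hilbert_Choice.inv w i)) then 1 / e else 0)"

definition degen_scale :: "(nat \<Rightarrow> nat) \<Rightarrow> complex \<Rightarrow> nat \<Rightarrow> complex" where
  "degen_scale \<tau> e j = (if j < \<tau> j then e else if \<tau> j < j then 1 / e else 1)"

definition degen_right :: "nat \<Rightarrow> (nat \<Rightarrow> nat) \<Rightarrow> complex \<Rightarrow> complex mat" where
  "degen_right n \<tau> e = mat n n (\<lambda>(t,j). if t = j then degen_scale \<tau> e j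
     else if t = \<tau> j \<and> t < j then -1 else 0)"

lemma degen_left_carrier [simp]: "degen_left n w \<tau> e \<in> carrier_mat n n"
  and degen_right_carrier [simp]: "degen_right n \<tau> e \<in> carrier_mat n n"
  by (simp_all add: degen_left_def degen_right_def)

lemma upper_triangular_degen_left: "upper_triangular (degen_left n w \<tau> e)"
  and upper_triangular_degen_right: "upper_triangular (degen_right n \<tau> e)"
  by (auto simp: degen_left_def degen_right_def)

lemma det_degen_left: "det (degen_left n w \<tau> e) = 1"
  by (subst det_upper_triangular_prod[OF upper_triangular_degen_left])
    (auto simp: degen_left_def)

lemma det_degen_right:
  assumes \<tau>: "\<tau> permutes {..<n}" and inv: "\<And>j. \<tau> (\<tau> j) = j" and e: "e \<noteq> 0"
  shows "det (degen_right n \<tau> e) = 1"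
proof -
  have "det (degen_right n \<tau> e) = (\<Prod>j<n. degen_scale \<tau> e j)"
    by (subst det_upper_triangular_prod[OF upper_triangular_degen_right])
      (auto simp: degen_right_def intro!: prod.cong)
  also have "\<dots> = (\<Prod>j<n. (if j < \<tau> j then e else 1) * (if \<tau> j < j then 1/e else 1))"
    by (intro prod.cong) (auto simp: degen_scale_def)
  also have "\<dots> = (\<Prod>j<n. if j < \<tau> j then e else 1) * (\<Prod>j<n. if \<tau> j < j then 1/e else 1)"
    by (rule prod.distrib)
  also have "(\<Prod>j<n. if \<tau> j < j then 1/e else 1) = (\<Prod>j<n. ((\<lambda>j. if \<tau> j < j then 1/e else 1) \<circ> \<tau>) j)"
    by (rule prod.permute[OF \<tau>])
  also have "\<dots> = (\<Prod>j<n. if j < \<tau> j then 1/e else 1)" using inv by (intro prod.cong) auto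
  also have "(\<Prod>j<n. if j < \<tau> j then e else 1) * \<dots>
      = (\<Prod>j<n. (if j < \<tau> j then e else 1) * (if j < \<tau> j then 1/e else 1))"
    by (rule prod.distrib[symmetric])
  also have "\<dots> = 1" using e by (intro prod.neutral) auto
  finally show ?thesis .
qed

lemma degen_left_mem_borel: "degen_left n w \<tau> e \<in> borel k n"
  by (simp add: borelI upper_triangular_degen_left det_degen_left)

lemma degen_right_mem_borel:
  "\<tau> permutes {..<n} \<Longrightarrow> (\<And>j. \<tau> (\<tau> j) = j) \<Longrightarrow> e \<noteq> 0 \<Longrightarrow> degen_right n \<tau> e \<in> borel k n"
  by (simp add: borelI upper_triangular_degen_right det_degen_right)

lemma index_degen_left_perm:
  assumes w: "w permutes {..<n}" and inv: "\<And>j. \<tau> (\<tau> j) = j" and i: "i < n" and t: "t < n"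
  shows "degen_left n w \<tau> e $$ (i, w t) = (if i = w t then 1 else if i < w t \<and> i = w (\<tau> t) then 1/e else 0)"
proof -
  have "w t = w (\<tau> (Hilbert_Choice.inv w i)) \<longleftrightarrow> i = w (\<tau> t)"
    using inv permutes_inj[OF w] by (metis injD permutes_inverses(1,2)[OF w])
  then show ?thesis using i t permutes_less[OF w t] by (auto simp: degen_left_def)
qed

lemma index_degeneration:
  assumes w: "w permutes {..<n}" and \<tau>: "\<tau> permutes {..<n}" and inv: "\<And>j. \<tau> (\<tau> j) = j"
    and dec: "\<And>p. p < n \<Longrightarrow> p < \<tau> p \<Longrightarrow> w (\<tau> p) < w p" and e: "e \<noteq> 0"
    and i: "i < n" and j: "j < n"
  shows "(degen_left n w \<tau> e * monomial_mat n w (\<lambda>_. c) * degen_right n \<tau> e) $$ (i,j)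
    = c * ((if i = w (\<tau> j) then if \<tau> j < j then -1 else 1 else 0)
      + e * (if j < \<tau> j \<and> i = w j then 1 else 0))"
proof -
  let ?L = "degen_left n w \<tau> e" and ?R = "degen_right n \<tau> e"
  have \<tau>j: "\<tau> j < n" using permutes_less[OF \<tau> j] .
  note L = index_degen_left_perm[OF w inv i]
  note LG = index_mult_monomial_mat[OF w degen_left_carrier i]
  have "(?L * monomial_mat n w (\<lambda>_. c) * ?R) $$ (i,j)
      = (\<Sum>t<n. (?L * monomial_mat n w (\<lambda>_. c)) $$ (i,t) * ?R $$ (t,j))"
    using i j mult_carrier_mat[OF degen_left_carrier monomial_mat_carrier]
    by (intro index_mult_mat_sum[of _ n n]) auto
  also have "\<dots> = (\<Sum>t<n. (if t = j then ?L $$ (i, w j) * c * degen_scale \<tau> e j else 0)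
        + (if \<tau> j < j \<and> t = \<tau> j then - (?L $$ (i, w (\<tau> j)) * c) else 0))"
    using j by (intro sum.cong) (auto simp: LG degen_right_def)
  also have "\<dots> = c * (?L $$ (i, w j) * degen_scale \<tau> e j
      + (if \<tau> j < j then - ?L $$ (i, w (\<tau> j)) else 0))"
    using j \<tau>j by (simp add: sum.distrib algebra_simps)
  also have "\<dots> = c * ((if i = w (\<tau> j) then if \<tau> j < j then -1 else 1 else 0)
      + e * (if j < \<tau> j \<and> i = w j then 1 else 0))"
  proof -
    consider "\<tau> j = j" | "j < \<tau> j" | "\<tau> j < j" by linarith
    then show ?thesis
    proof cases
      case 2
      then show ?thesis using L[OF j] dec[OF j] e by (auto simp: degen_scale_def)
    next
      case 3
      then have "w j < w (\<tau> j)" using dec[OF \<tau>j] inv[of j] by auto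
      then show ?thesis using 3 L[OF j] L[OF \<tau>j] inv[of j] e
        by (auto simp: degen_scale_def field_simps)
    qed (use L[OF j] in \<open>auto simp: degen_scale_def\<close>)
  qed
  finally show ?thesis .
qed

section \<open>Schubert varieties that are Hessenberg varieties\<close>

locale hessenberg_schubert = hessenberg +
  fixes x :: "complex mat" and w :: "nat \<Rightarrow> nat"
  assumes x_lie: "x \<in> lie kind n" and w_permutes: "w permutes {..<n}"
    and variety_eq: "hessenberg_variety kind n x H = schubert kind n w"
begin

abbreviation cell_closure :: "complex mat set" where
  "cell_closure \<equiv> closure_in_grp kind n (bruhat_cell kind n w)"

lemma x_carrier: "x \<in> carrier_mat n n"
  using x_lie unfolding lie_def by auto

lemma cell_closure_carrier: "z \<in> cell_closure \<Longrightarrow> z \<in> carrier_mat n n"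
  unfolding closure_in_grp_def grp_def by auto

lemma coset_self: "g \<in> carrier_mat n n \<Longrightarrow> g \<in> coset_B kind n g"
  unfolding coset_B_def using one_mem_borel by force

lemma conj_mem_if_in_cell_closure:
  assumes z: "z \<in> cell_closure" and zi: "zi \<in> carrier_mat n n"
    and z_zi: "z * zi = 1\<^sub>m n" and zi_z: "zi * z = 1\<^sub>m n"
  shows "zi * x * z \<in> H"
proof -
  have zc: "z \<in> carrier_mat n n" using cell_closure_carrier[OF z] .
  have "coset_B kind n z \<in> hessenberg_variety kind n x H"
    unfolding variety_eq schubert_def using z by auto
  then obtain g gi where cz: "coset_B kind n z = coset_B kind n g" and gG: "g \<in> grp kind n"
    and gi: "gi \<in> carrier_mat n n" "gi * g = 1\<^sub>m n" and gH: "gi * x * g \<in> H"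
    unfolding hessenberg_variety_def by blast
  have gc: "g \<in> carrier_mat n n" using gG unfolding grp_def by auto
  obtain b1 where b1: "b1 \<in> borel kind n" and z_g: "z = g * b1"
    using coset_self[OF zc] cz unfolding coset_B_def by auto
  obtain b2 where b2: "b2 \<in> borel kind n" and g_z: "g = z * b2"
    using coset_self[OF gc] cz unfolding coset_B_def by auto
  note b1c = borelD(1)[OF b1] and b2c = borelD(1)[OF b2]
  have b21: "b2 * b1 = 1\<^sub>m n"
  proof -
    have "zi * ((z * b2) * b1) = (zi * z) * (b2 * b1)"
      using zi zc b1c b2c by (simp add: assoc_mult_mat[OF zi zc mult_carrier_mat[OF b2c b1c]])
    then have "b2 * b1 = zi * ((z * b2) * b1)" using zi_z b1c b2c by simp
    also have "\<dots> = 1\<^sub>m n" by (simp only: g_z[symmetric] z_g[symmetric] zi_z)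
    finally show ?thesis .
  qed
  have b12: "b1 * b2 = 1\<^sub>m n"
  proof -
    have "1\<^sub>m n = gi * ((g * b1) * b2)" by (simp only: g_z[symmetric] z_g[symmetric] gi(2))
    also have "\<dots> = (gi * g) * (b1 * b2)"
      using gi(1) gc b1c b2c by (simp add: assoc_mult_mat[OF gi(1) gc mult_carrier_mat[OF b1c b2c]])
    also have "\<dots> = b1 * b2" unfolding gi(2) by (rule left_mult_one_mat[OF mult_carrier_mat[OF b1c b2c]])
    finally show ?thesis ..
  qed
  have "gi = gi * ((g * b1) * zi)" using z_zi gi by (simp only: z_g[symmetric]) simp
  also have "\<dots> = (gi * g) * (b1 * zi)"
    using gi(1) gc b1c zi by (simp add: assoc_mult_mat[OF gi(1) gc mult_carrier_mat[OF b1c zi]])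
  also have "\<dots> = b1 * zi" unfolding gi(2) by (rule left_mult_one_mat[OF mult_carrier_mat[OF b1c zi]])
  finally have "b2 * (gi * x * g) * b1 = (b2 * b1) * (zi * x * z) * (b2 * b1)"
    using b1c b2c zi zc x_carrier by (simp add: g_z mult_carrier_mat[of _ n n] assoc_mult_mat[of _ n n _ n _ n])
  then have "b2 * (gi * x * g) * b1 = zi * x * z"
    using b21 zi zc x_carrier by simp
  moreover have "b2 * (gi * x * g) * b1 \<in> H"
    using conj_upper_triangular_mem[OF b2c b1c borelD(2)[OF b2] borelD(2)[OF b1] b21 b12 gH] .
  ultimately show ?thesis by simp
qed

lemma borel_translate_in_cell_closure:
  assumes VG: "V \<in> grp kind n" and Vi: "Vi \<in> carrier_mat n n"
    and "V * Vi = 1\<^sub>m n" "Vi * V = 1\<^sub>m n" and "Vi * x * V \<in> H"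
  obtains b where "b \<in> borel kind n" "V * b \<in> cell_closure"
proof -
  have "coset_B kind n V \<in> schubert kind n w"
    unfolding variety_eq[symmetric] hessenberg_variety_def using assms by blast
  then obtain z where z: "z \<in> cell_closure" and cz: "coset_B kind n V = coset_B kind n z"
    unfolding schubert_def by auto
  have "z \<in> coset_B kind n V" using cz coset_self[OF cell_closure_carrier[OF z]] by simp
  then show ?thesis using that z unfolding coset_B_def by blast
qed

lemma mult_borel_in_cell_closure:
  assumes b: "b \<in> borel kind n" and z: "z \<in> cell_closure"
  shows "b * z \<in> cell_closure"
proof -
  have bc: "b \<in> carrier_mat n n" using borelD b by auto
  obtain s where s: "\<And>m. s m \<in> bruhat_cell kind n w" and zG: "z \<in> grp kind n"
    and conv: "\<And>i j. i < n \<Longrightarrow> j < n \<Longrightarrow> (\<lambda>m. s m $$ (i,j)) \<longlonglongrightarrow> z $$ (i,j)"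
    using z unfolding closure_in_grp_def by blast
  have zc: "z \<in> carrier_mat n n" using zG unfolding grp_def by auto
  have "(\<lambda>m. (b * s m) $$ (i,j)) \<longlonglongrightarrow> (b * z) $$ (i,j)" if "i < n" "j < n" for i j
  proof -
    have "(\<lambda>m. \<Sum>t<n. b $$ (i,t) * s m $$ (t,j)) \<longlonglongrightarrow> (\<Sum>t<n. b $$ (i,t) * z $$ (t,j))"
      using that by (intro tendsto_sum tendsto_mult_left conv) auto
    moreover have "(b * s m) $$ (i,j) = (\<Sum>t<n. b $$ (i,t) * s m $$ (t,j))" for m
      using that bc bruhat_cell_carrier[OF s] by (intro index_mult_mat_sum) auto
    moreover have "(b * z) $$ (i,j) = (\<Sum>t<n. b $$ (i,t) * z $$ (t,j))"
      using that bc zc by (intro index_mult_mat_sum) auto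
    ultimately show ?thesis by simp
  qed
  moreover have "b * z \<in> grp kind n"
    using b zG bc zc unfolding borel_def grp_def by (cases kind) (auto simp: det_mult)
  ultimately show ?thesis
    unfolding closure_in_grp_def using mult_bruhat_cell[OF b s]
    by (intro CollectI conjI exI[of _ "\<lambda>m. b * s m"]) auto
qed

lemma signed_perm_mat_in_cell_closure:
  assumes \<tau>: "\<tau> permutes {..<n}" and inv: "\<And>j. \<tau> (\<tau> j) = j"
    and dec: "\<And>p. p < n \<Longrightarrow> p < \<tau> p \<Longrightarrow> w (\<tau> p) < w p"
    and c: "c \<cdot>\<^sub>m perm_mat n w \<in> grp kind n"
  shows "monomial_mat n (w \<circ> \<tau>) (\<lambda>j. c * (if \<tau> j < j then -1 else 1)) \<in> cell_closure"
proof -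
  let ?z = "monomial_mat n (w \<circ> \<tau>) (\<lambda>j. c * (if \<tau> j < j then -1 else 1))"
  define e where "e m = complex_of_real (inverse (real (Suc m)))" for m
  have e0: "e m \<noteq> 0" for m
  proof -
    have "inverse (real (Suc m)) \<noteq> 0" by simp
    then show ?thesis unfolding e_def by (simp only: of_real_eq_0_iff not_False_eq_True)
  qed
  have "e \<longlonglongrightarrow> 0"
    unfolding e_def using tendsto_of_real[OF LIMSEQ_inverse_real_of_nat, where 'a=complex]
    by (simp only: of_real_0)
  define s where "s m = degen_left n w \<tau> (e m) * (c \<cdot>\<^sub>m perm_mat n w) * degen_right n \<tau> (e m)" for m
  have s_cell: "s m \<in> bruhat_cell kind n w" for m
    unfolding bruhat_cell_def s_def
    using degen_left_mem_borel degen_right_mem_borel[OF \<tau> inv e0] c by blast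
  have conv: "(\<lambda>m. s m $$ (i,j)) \<longlonglongrightarrow> ?z $$ (i,j)" if "i < n" "j < n" for i j
  proof -
    have "s m $$ (i,j) = c * ((if i = w (\<tau> j) then if \<tau> j < j then -1 else 1 else 0)
        + e m * (if j < \<tau> j \<and> i = w j then 1 else 0))" for m
      unfolding s_def smult_perm_mat by (rule index_degeneration[OF w_permutes \<tau> inv dec e0 that])
    moreover have "?z $$ (i,j) = c * ((if i = w (\<tau> j) then if \<tau> j < j then -1 else 1 else 0)
        + 0 * (if j < \<tau> j \<and> i = w j then 1 else 0))"
      using that by auto
    ultimately show ?thesis by (simp only:) (intro tendsto_intros \<open>e \<longlonglongrightarrow> 0\<close>)
  qed
  have "det (s m) = det (c \<cdot>\<^sub>m perm_mat n w)" for m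
    using c unfolding s_def grp_def
    by (simp add: det_mult[OF mult_carrier_mat[OF degen_left_carrier] degen_right_carrier]
        det_mult[OF degen_left_carrier] det_degen_left det_degen_right[OF \<tau> inv e0])
  then have "(\<lambda>m. det (c \<cdot>\<^sub>m perm_mat n w)) \<longlonglongrightarrow> det ?z"
    using tendsto_det[OF bruhat_cell_carrier[OF s_cell] _ conv] by simp
  then have "det ?z = det (c \<cdot>\<^sub>m perm_mat n w)" using LIMSEQ_const_iff by metis
  then have "?z \<in> grp kind n" using c unfolding grp_def by (cases kind) auto
  then show ?thesis unfolding closure_in_grp_def using s_cell conv by blast
qed

end

section \<open>A rank condition on the closure of a Bruhat cell\<close>

definition row_submat :: "nat \<Rightarrow> (nat \<Rightarrow> nat) \<Rightarrow> 'a mat \<Rightarrow> 'a mat" where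
  "row_submat m \<rho> g = mat m m (\<lambda>(a,j). g $$ (\<rho> a, j))"

lemma row_submat_carrier [simp]: "row_submat m \<rho> g \<in> carrier_mat m m"
  and dim_row_submat [simp]: "dim_row (row_submat m \<rho> g) = m" "dim_col (row_submat m \<rho> g) = m"
  and index_row_submat [simp]: "a < m \<Longrightarrow> j < m \<Longrightarrow> row_submat m \<rho> g $$ (a,j) = g $$ (\<rho> a, j)"
  by (simp_all add: row_submat_def)

lemma row_submat_mult_upper_triangular:
  fixes g b :: "'a::comm_ring_1 mat"
  assumes g: "g \<in> carrier_mat n n" and b: "b \<in> carrier_mat n n" and ub: "upper_triangular b"
    and mn: "m \<le> n" and \<rho>: "\<And>a. a < m \<Longrightarrow> \<rho> a < n"
  shows "row_submat m \<rho> (g * b) = row_submat m \<rho> g * row_submat m id b"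
proof (rule eq_matI)
  fix a j
  assume "a < dim_row (row_submat m \<rho> g * row_submat m id b)"
    and "j < dim_col (row_submat m \<rho> g * row_submat m id b)"
  then have a: "a < m" and j: "j < m" by auto
  have "(g * b) $$ (\<rho> a, j) = (\<Sum>t<n. g $$ (\<rho> a, t) * b $$ (t,j))"
    using g b \<rho>[OF a] j mn by (intro index_mult_mat_sum[of _ n n _ n]) auto
  also have "\<dots> = (\<Sum>t<m. g $$ (\<rho> a, t) * b $$ (t,j))"
    using upper_triangularD[OF ub] b j mn by (intro sum.mono_neutral_right) auto
  also have "\<dots> = (\<Sum>t<m. row_submat m \<rho> g $$ (a,t) * row_submat m id b $$ (t,j))"
    using a j by simp
  also have "\<dots> = (row_submat m \<rho> g * row_submat m id b) $$ (a,j)"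
    using a j by (intro index_mult_mat_sum[symmetric]) auto
  finally show "row_submat m \<rho> (g * b) $$ (a,j) = (row_submat m \<rho> g * row_submat m id b) $$ (a,j)"
    using a j by simp
qed auto

text \<open>Under the hypothesis on \<open>\<rho>\<close>, every term of the Leibniz expansion of the minor
  picks an entry of the upper triangular left factor strictly below its diagonal.\<close>

lemma det_row_submat_bruhat_cell:
  assumes w: "w permutes {..<n}" and g: "g \<in> bruhat_cell k n w"
    and mn: "m \<le> n" and \<rho>: "\<And>a. a < m \<Longrightarrow> \<rho> a < n"
    and below: "\<And>\<pi>. \<pi> permutes {0..<m} \<Longrightarrow> \<exists>a<m. w (\<pi> a) < \<rho> a"
  shows "det (row_submat m \<rho> g) = 0"
proof -
  obtain b1 b2 c where b1: "b1 \<in> borel k n" and b2: "b2 \<in> borel k n"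
    and g_eq: "g = b1 * monomial_mat n w (\<lambda>_. c) * b2"
    using g unfolding bruhat_cell_def smult_perm_mat by blast
  note b1c = borelD(1)[OF b1] and b2c = borelD(1)[OF b2]
  let ?N = "row_submat m \<rho> (b1 * monomial_mat n w (\<lambda>_. c))"
  have N: "?N $$ (a,t) = b1 $$ (\<rho> a, w t) * c" if a: "a < m" and t: "t < m" for a t
    using index_mult_monomial_mat[OF w b1c \<rho>[OF a], of t] a t mn by (simp del: index_mult_mat)
  have "det ?N = 0"
  proof -
    have "(\<Prod>a = 0..<m. ?N $$ (a, \<pi> a)) = 0" if \<pi>: "\<pi> permutes {0..<m}" for \<pi>
    proof -
      obtain a where a: "a < m" and lt: "w (\<pi> a) < \<rho> a" using below[OF \<pi>] by blast
      have "\<pi> a < m" using permutes_in_image[OF \<pi>, of a] a by auto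
      then have "?N $$ (a, \<pi> a) = 0"
        using N[OF a] upper_triangularD[OF borelD(2)[OF b1] lt] \<rho>[OF a] b1c by simp
      then show ?thesis using a by (intro prod_zero) auto
    qed
    then show ?thesis by (simp only: det_def'[OF row_submat_carrier]) (intro sum.neutral, simp)
  qed
  then show ?thesis
    using b1c b2c
    by (simp add: g_eq row_submat_mult_upper_triangular[OF _ b2c borelD(2)[OF b2] mn \<rho>]
        det_mult[OF row_submat_carrier row_submat_carrier])
qed

lemma row_submat_monomial_mult:
  assumes u: "u permutes {..<n}" and b: "b \<in> carrier_mat n n" and mn: "m \<le> n"
  shows "row_submat m u (monomial_mat n u (\<lambda>_. c) * b) = c \<cdot>\<^sub>m row_submat m id b"
proof (rule eq_matI)
  fix a j
  assume "a < dim_row (c \<cdot>\<^sub>m row_submat m id b)" "j < dim_col (c \<cdot>\<^sub>m row_submat m id b)"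
  then have a: "a < m" and j: "j < m" by auto
  have ua: "u a < n" using permutes_less[OF u] a mn by simp
  have "(monomial_mat n u (\<lambda>_. c) * b) $$ (u a, j)
      = (\<Sum>t<n. monomial_mat n u (\<lambda>_. c) $$ (u a, t) * b $$ (t,j))"
    using j mn ua b by (intro index_mult_mat_sum[of _ n n _ n]) auto
  also have "\<dots> = (\<Sum>t<n. if t = a then c * b $$ (a,j) else 0)"
  proof (intro sum.cong refl)
    fix t
    assume "t \<in> {..<n}"
    then have "monomial_mat n u (\<lambda>_. c) $$ (u a, t) = (if a = t then c else 0)"
      using ua by (simp only: index_monomial_mat inj_eq[OF permutes_inj[OF u]] lessThan_iff)
    then show "monomial_mat n u (\<lambda>_. c) $$ (u a, t) * b $$ (t,j) = (if t = a then c * b $$ (a,j) else 0)"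
      by simp
  qed
  also have "\<dots> = c * b $$ (a,j)" using a mn by simp
  finally show "row_submat m u (monomial_mat n u (\<lambda>_. c) * b) $$ (a,j) = (c \<cdot>\<^sub>m row_submat m id b) $$ (a,j)"
    using a j mn by simp
qed auto

lemma det_leading_submat_borel:
  assumes b: "b \<in> borel k n" and mn: "m \<le> n"
  shows "det (row_submat m id b) \<noteq> 0"
proof -
  have ut: "upper_triangular (row_submat m id b)"
    using upper_triangularD[OF borelD(2)[OF b]] borelD(1)[OF b] mn by (intro upper_triangularI) simp
  have "det b = (\<Prod>i<n. b $$ (i,i))"
    by (rule det_upper_triangular_prod[OF borelD(2,1)[OF b]])
  then have "b $$ (i,i) \<noteq> 0" if "i < n" for i
    using borelD(3)[OF b] that by (metis finite_lessThan lessThan_iff prod_zero_iff)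
  moreover have "det (row_submat m id b) = (\<Prod>i<m. b $$ (i,i))"
    by (simp add: det_upper_triangular_prod[OF ut row_submat_carrier])
  ultimately show ?thesis using mn by simp
qed

lemma (in hessenberg_schubert) det_row_submat_cell_closure:
  assumes z: "z \<in> cell_closure" and mn: "m \<le> n" and \<rho>: "\<And>a. a < m \<Longrightarrow> \<rho> a < n"
    and below: "\<And>\<pi>. \<pi> permutes {0..<m} \<Longrightarrow> \<exists>a<m. w (\<pi> a) < \<rho> a"
  shows "det (row_submat m \<rho> z) = 0"
proof -
  obtain s where s: "\<And>k. s k \<in> bruhat_cell kind n w"
    and conv: "\<And>i j. i < n \<Longrightarrow> j < n \<Longrightarrow> (\<lambda>k. s k $$ (i,j)) \<longlonglongrightarrow> z $$ (i,j)"
    using z unfolding closure_in_grp_def by blast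
  have "(\<lambda>k. det (row_submat m \<rho> (s k))) \<longlonglongrightarrow> det (row_submat m \<rho> z)"
  proof (rule tendsto_det)
    fix a j
    assume a: "a < m" and j: "j < m"
    then have "j < n" using mn by simp
    then show "(\<lambda>k. row_submat m \<rho> (s k) $$ (a,j)) \<longlonglongrightarrow> row_submat m \<rho> z $$ (a,j)"
      using conv[OF \<rho>[OF a]] a j by simp
  qed simp_all
  moreover have "det (row_submat m \<rho> (s k)) = 0" for k
    by (rule det_row_submat_bruhat_cell[OF w_permutes s mn \<rho> below])
  ultimately have "(\<lambda>k. 0) \<longlonglongrightarrow> det (row_submat m \<rho> z)" by simp
  then show ?thesis using LIMSEQ_const_iff by metis
qed

text \<open>The rank condition that shows \<open>w \<circ> (p\<^sub>2 p\<^sub>3) \<not>\<le> w\<close> in the Bruhat order: among the first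
  \<open>p\<^sub>2 + 1\<close> positions, \<open>w \<circ> (p\<^sub>2 p\<^sub>3)\<close> has one more value \<open>\<ge> w p\<^sub>3\<close> than \<open>w\<close>.\<close>

lemma transposed_perm_not_below:
  fixes w :: "nat \<Rightarrow> nat"
  assumes p23: "p2 < p3" and w23: "w p2 < w p3" and \<pi>: "\<pi> permutes {0..<Suc p2}"
  shows "\<exists>a<Suc p2. w (\<pi> a) < (w \<circ> Transposition.transpose p2 p3) a"
proof (rule ccontr)
  assume none: "\<not> ?thesis"
  have le: "(w \<circ> Transposition.transpose p2 p3) a \<le> w (\<pi> a)" if "a < Suc p2" for a
  proof -
    have "\<not> w (\<pi> a) < (w \<circ> Transposition.transpose p2 p3) a" using none that by blast
    then show ?thesis by (simp only: not_less)
  qed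
  define S where "S = {t \<in> {0..<Suc p2}. w p3 \<le> w t}"
  have fin: "finite S" by (simp add: S_def)
  have "\<pi> ` insert p2 S \<subseteq> S"
  proof
    fix y
    assume "y \<in> \<pi> ` insert p2 S"
    then obtain a where a: "a \<in> insert p2 S" and y: "y = \<pi> a" by blast
    then have a_lt: "a < Suc p2" by (auto simp: S_def)
    have "w p3 \<le> (w \<circ> Transposition.transpose p2 p3) a"
      using a p23 a_lt by (auto simp: S_def transpose_def)
    then have "w p3 \<le> w (\<pi> a)" using le[OF a_lt] by (rule order_trans)
    moreover have "\<pi> a < Suc p2" using permutes_in_image[OF \<pi>, of a] a_lt by simp
    ultimately show "y \<in> S" by (simp add: S_def y)
  qed
  then have "card (\<pi> ` insert p2 S) \<le> card S" by (rule card_mono[OF fin])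
  moreover have "card (\<pi> ` insert p2 S) = card (insert p2 S)"
    by (rule card_image[OF inj_on_subset[OF permutes_inj[OF \<pi>] subset_UNIV]])
  moreover have "p2 \<notin> S" using w23 by (simp add: S_def)
  ultimately show False using fin by simp
qed

section \<open>Support of \<open>H\<close> from the \<open>T\<close>-fixed points of the Schubert variety\<close>

definition inversion_involution :: "nat \<Rightarrow> (nat \<Rightarrow> nat) \<Rightarrow> (nat \<Rightarrow> nat) \<Rightarrow> bool" where
  "inversion_involution n w \<sigma> \<longleftrightarrow> \<sigma> permutes {..<n} \<and> (\<forall>j. \<sigma> (\<sigma> j) = j)
     \<and> (\<forall>p<n. p < \<sigma> p \<longrightarrow> w (\<sigma> p) < w p)"

lemma inversion_involution_id: "inversion_involution n w id"
  by (simp add: inversion_involution_def)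

context hessenberg_schubert
begin

lemma conj_signed_perm_mem:
  assumes \<sigma>: "inversion_involution n w \<sigma>" and b: "b \<in> borel kind n"
    and bi: "bi \<in> carrier_mat n n" "b * bi = 1\<^sub>m n" "bi * b = 1\<^sub>m n" and n: "0 < n"
  obtains s where "\<And>j. j < n \<Longrightarrow> s j \<noteq> 0"
    and "monomial_mat_inv n (w \<circ> \<sigma>) s * (bi * x * b) * monomial_mat n (w \<circ> \<sigma>) s \<in> H"
proof -
  obtain c where c: "c \<noteq> 0" "c \<cdot>\<^sub>m perm_mat n w \<in> grp kind n"
    using scaled_perm_mat_mem_grp[OF w_permutes n] by blast
  define s where "s j = c * (if \<sigma> j < j then -1 else 1)" for j
  have s0: "\<And>j. j < n \<Longrightarrow> s j \<noteq> 0" using c by (simp add: s_def)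
  have u: "w \<circ> \<sigma> permutes {..<n}"
    using \<sigma> w_permutes unfolding inversion_involution_def by (blast intro: permutes_compose)
  let ?z = "monomial_mat n (w \<circ> \<sigma>) s" and ?zi = "monomial_mat_inv n (w \<circ> \<sigma>) s"
  have "?z \<in> cell_closure"
    using \<sigma> c(2) unfolding s_def inversion_involution_def
    by (intro signed_perm_mat_in_cell_closure) auto
  then have bz: "b * ?z \<in> cell_closure" by (rule mult_borel_in_cell_closure[OF b])
  note bc = borelD(1)[OF b] and inv = monomial_mat_mult_inv[OF u s0] monomial_mat_inv_mult[OF u s0]
  have "(b * ?z) * (?zi * bi) = b * ((?z * ?zi) * bi)"
    using bc bi(1) by (simp add: assoc_mult_mat[of _ n n _ n _ n] mult_carrier_mat[of _ n n])
  also have "\<dots> = 1\<^sub>m n" using bc bi inv(1) by simp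
  finally have "(b * ?z) * (?zi * bi) = 1\<^sub>m n" .
  moreover have "(?zi * bi) * (b * ?z) = ?zi * ((bi * b) * ?z)"
    using bc bi(1) by (simp add: assoc_mult_mat[of _ n n _ n _ n] mult_carrier_mat[of _ n n])
  then have "(?zi * bi) * (b * ?z) = 1\<^sub>m n" using bi inv(2) by simp
  ultimately have "(?zi * bi) * x * (b * ?z) \<in> H"
    using bi bc by (intro conj_mem_if_in_cell_closure[OF bz]) auto
  moreover have "(?zi * bi) * x * (b * ?z) = ?zi * (bi * x * b) * ?z"
    using bc bi x_carrier by (simp add: assoc_mult_mat[of _ n n _ n _ n] mult_carrier_mat[of _ n n])
  ultimately show ?thesis using that s0 by auto
qed

lemma elem_mat_mem_if_conj_entry_signed_perm:
  assumes \<sigma>: "inversion_involution n w \<sigma>" and b: "b \<in> borel kind n"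
    and bi: "bi \<in> carrier_mat n n" "b * bi = 1\<^sub>m n" "bi * b = 1\<^sub>m n"
    and i: "i < n" and j: "j < n" and ij: "i \<noteq> j"
    and nz: "(bi * x * b) $$ (w (\<sigma> i), w (\<sigma> j)) \<noteq> 0"
  shows "elem_mat n i j \<in> H"
proof -
  obtain s where s0: "\<And>j. j < n \<Longrightarrow> s j \<noteq> 0"
    and M: "monomial_mat_inv n (w \<circ> \<sigma>) s * (bi * x * b) * monomial_mat n (w \<circ> \<sigma>) s \<in> H"
    using conj_signed_perm_mem[OF \<sigma> b bi] i by auto
  have u: "w \<circ> \<sigma> permutes {..<n}"
    using \<sigma> w_permutes unfolding inversion_involution_def by (blast intro: permutes_compose)
  have "(bi * x * b) \<in> carrier_mat n n" using bi borelD(1)[OF b] x_carrier by auto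
  then show ?thesis
    using elem_mat_mem_if_entry[OF M i j ij] nz s0[OF i] s0[OF j]
    by (simp add: index_conj_monomial_mat[OF u _ i j] del: index_mult_mat)
qed

lemma elem_mat_mem_if_entry_signed_perm:
  assumes "inversion_involution n w \<sigma>" "i < n" "j < n" "i \<noteq> j" "x $$ (w (\<sigma> i), w (\<sigma> j)) \<noteq> 0"
  shows "elem_mat n i j \<in> H"
  using elem_mat_mem_if_conj_entry_signed_perm[OF assms(1) one_mem_borel _ _ _ assms(2-4)]
    assms(5) x_carrier by simp

lemma diag_perm_conj_mem: "mat_diag n (\<lambda>i. x $$ (w i, w i)) \<in> H"
proof (cases "n = 0")
  case True
  then have "mat_diag n (\<lambda>i. x $$ (w i, w i)) = 0\<^sub>m n n" by (intro eq_matI) auto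
  then show ?thesis using zero_mem by simp
next
  case False
  then obtain s where s0: "\<And>j. j < n \<Longrightarrow> s j \<noteq> 0"
    and M: "monomial_mat_inv n (w \<circ> id) s * (1\<^sub>m n * x * 1\<^sub>m n) * monomial_mat n (w \<circ> id) s \<in> H"
    using conj_signed_perm_mem[OF inversion_involution_id one_mem_borel] by auto
  have "diag_part n (monomial_mat_inv n w s * x * monomial_mat n w s) = mat_diag n (\<lambda>i. x $$ (w i, w i))"
    using s0 by (intro eq_matI)
      (simp_all add: diag_part_def index_conj_monomial_mat[OF w_permutes x_carrier] del: index_mult_mat)
  then show ?thesis using diag_part_mem[of "monomial_mat_inv n w s * x * monomial_mat n w s"] M x_carrier
    by simp
qed

end

section \<open>The pattern \<open>[4231]\<close>\<close>

lemma conj_addrow_mat_index: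
  fixes x :: "'a::comm_ring_1 mat"
  assumes BC: "B < C" and C: "C < n" and x: "x \<in> carrier_mat n n"
  shows "(addrow_mat n (-1) B C * x * addrow_mat n 1 B C) $$ (B,C)
    = x $$ (B,C) + x $$ (B,B) - x $$ (C,C) - x $$ (C,B)"
proof -
  have B: "B < n" using BC C by simp
  have row: "(\<Sum>b<n. x $$ (a,b) * addrow_mat n 1 B C $$ (b,C)) = x $$ (a,C) + x $$ (a,B)" for a
  proof -
    have "(\<Sum>b<n. x $$ (a,b) * addrow_mat n 1 B C $$ (b,C))
        = (\<Sum>b<n. (if b = C then x $$ (a,C) else 0) + (if b = B then x $$ (a,B) else 0))"
      using BC C by (intro sum.cong) auto
    also have "\<dots> = x $$ (a,C) + x $$ (a,B)" using B C by (simp add: sum.distrib)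
    finally show ?thesis .
  qed
  have "(addrow_mat n (-1) B C * x * addrow_mat n 1 B C) $$ (B,C)
      = (\<Sum>a<n. addrow_mat n (-1) B C $$ (B,a) * (\<Sum>b<n. x $$ (a,b) * addrow_mat n 1 B C $$ (b,C)))"
    using B C x by (simp add: index_mult3_mat_sum[of _ n] sum_distrib_left mult.assoc del: index_mult_mat)
  also have "\<dots> = (\<Sum>a<n. addrow_mat n (-1) B C $$ (B,a) * (x $$ (a,C) + x $$ (a,B)))"
    by (simp only: row)
  also have "\<dots> = (\<Sum>a<n. (if a = B then x $$ (B,C) + x $$ (B,B) else 0)
      + (if a = C then - (x $$ (C,C) + x $$ (C,B)) else 0))"
    using BC C by (intro sum.cong) auto
  also have "\<dots> = x $$ (B,C) + x $$ (B,B) - x $$ (C,C) - x $$ (C,B)"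
    using B C by (simp add: sum.distrib)
  finally show ?thesis .
qed

lemma addrow_mat_mem_borel:
  assumes "B < C" "C < n"
  shows "addrow_mat n t B C \<in> borel k n"
  using assms by (intro borelI upper_triangularI) (auto simp: det_addrow_mat)

locale hessenberg_schubert_4231 = hessenberg_schubert +
  fixes p1 p2 p3 p4 :: nat
  assumes positions: "p1 < p2" "p2 < p3" "p3 < p4" "p4 < n"
    and pattern_values: "w p4 < w p2" "w p2 < w p3" "w p3 < w p1"
begin

abbreviation v :: "nat \<Rightarrow> nat" where
  "v \<equiv> w \<circ> Transposition.transpose p2 p3"

lemma v_permutes: "v permutes {..<n}"
  using positions by (intro permutes_compose[OF permutes_swap_id w_permutes]) auto

lemma inversion_involutions:
  "inversion_involution n w (Transposition.transpose p1 p3)"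
  "inversion_involution n w (Transposition.transpose p2 p4)"
  "inversion_involution n w (Transposition.transpose p1 p3 \<circ> Transposition.transpose p2 p4)"
  using positions pattern_values
  by (auto simp: inversion_involution_def transpose_def permutes_swap_id
      intro!: permutes_compose[OF permutes_swap_id permutes_swap_id])

text \<open>The entry \<open>x\<^sub>v\<^sub>a\<^sub>,\<^sub>v\<^sub>b\<close> reappears in the conjugate of \<open>x\<close> by some \<open>w \<circ> \<sigma>\<close> at a
  position \<open>(a', b')\<close> with \<open>a \<le> a'\<close> and \<open>b' \<le> b\<close>; monotonicity of the matrix units in \<open>H\<close>
  then gives \<open>E\<^sub>a\<^sub>b\<close>.\<close>

lemma elem_mat_mem_if_entry_transposed:
  assumes a: "a < n" and b: "b < n" and ab: "a \<noteq> b" and nz: "x $$ (v a, v b) \<noteq> 0"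
  shows "elem_mat n a b \<in> H"
proof -
  have via: "elem_mat n a b \<in> H"
    if \<sigma>: "inversion_involution n w \<sigma>"
      and le: "a \<le> \<sigma> (Transposition.transpose p2 p3 a)" "\<sigma> (Transposition.transpose p2 p3 b) \<le> b"
    for \<sigma>
  proof -
    let ?a = "\<sigma> (Transposition.transpose p2 p3 a)" and ?b = "\<sigma> (Transposition.transpose p2 p3 b)"
    have \<sigma>p: "\<sigma> permutes {..<n}" and \<sigma>\<sigma>: "\<And>j. \<sigma> (\<sigma> j) = j"
      using \<sigma> by (auto simp: inversion_involution_def)
    have lt: "?a < n" "?b < n"
      using a b positions by (auto intro!: permutes_less[OF \<sigma>p] simp: transpose_def)
    have ne: "?a \<noteq> ?b" using ab \<sigma>\<sigma> by (metis transpose_eq_iff)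
    have "elem_mat n ?a ?b \<in> H"
      using \<sigma>\<sigma> nz by (intro elem_mat_mem_if_entry_signed_perm[OF \<sigma> lt ne]) auto
    then show ?thesis using elem_mat_mem_mono lt ne le b ab by blast
  qed
  consider "a = p3" "b = p2" | "a = p3" "b \<noteq> p2" | "a = p2" | "a \<noteq> p2" "a \<noteq> p3" "b = p2"
    | "a \<noteq> p2" "a \<noteq> p3" "b \<noteq> p2" by blast
  then show ?thesis
  proof cases
    case 1
    then show ?thesis
      using positions by (intro via[OF inversion_involutions(3)]) (auto simp: transpose_def)
  next
    case 2
    then show ?thesis
      using positions ab by (intro via[OF inversion_involutions(2)]) (auto simp: transpose_def)
  next
    case 4
    then show ?thesis
      using positions ab by (intro via[OF inversion_involutions(1)]) (auto simp: transpose_def)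
  qed (use positions ab in \<open>(intro via[OF inversion_involution_id], auto simp: transpose_def)+\<close>)
qed

text \<open>Conjugating by \<open>I + E\<^sub>B\<^sub>C\<close> moves \<open>x\<^sub>B\<^sub>B - x\<^sub>C\<^sub>C\<close> into the entry \<open>(B,C)\<close>.\<close>

lemma elem_mat_41_mem:
  assumes ne: "x $$ (w p2, w p2) \<noteq> x $$ (w p3, w p3)" and zero: "x $$ (w p3, w p2) = 0"
  shows "elem_mat n p4 p1 \<in> H"
proof -
  let ?\<sigma> = "Transposition.transpose p1 p3 \<circ> Transposition.transpose p2 p4"
  have \<sigma>41: "w (?\<sigma> p4) = w p2" "w (?\<sigma> p1) = w p3"
    using positions by (auto simp: transpose_def)
  have BC: "w p2 < w p3" "w p3 < n"
    using pattern_values positions permutes_less[OF w_permutes] by auto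
  let ?u = "addrow_mat n 1 (w p2) (w p3) :: complex mat" and ?ui = "addrow_mat n (-1) (w p2) (w p3)"
  show ?thesis
  proof (cases "(?ui * x * ?u) $$ (w p2, w p3) = 0")
    case False
    have inv: "?u * ?ui = 1\<^sub>m n" "?ui * ?u = 1\<^sub>m n"
      using addrow_mat_inv[of "w p2" n "w p3" 1] addrow_mat_inv[of "w p2" n "w p3" "-1"] BC
      by auto
    have nz: "(?ui * x * ?u) $$ (w (?\<sigma> p4), w (?\<sigma> p1)) \<noteq> 0"
      using False by (simp only: \<sigma>41 not_False_eq_True)
    show ?thesis
      using positions by (intro elem_mat_mem_if_conj_entry_signed_perm[OF inversion_involutions(3)
            addrow_mat_mem_borel[OF BC] addrow_mat_carrier inv _ _ _ nz]) auto
  next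
    case True
    then have "x $$ (w p2, w p3) \<noteq> 0"
      using conj_addrow_mat_index[OF BC x_carrier] ne zero by auto
    then show ?thesis
      using \<sigma>41 positions by (intro elem_mat_mem_if_entry_signed_perm[OF inversion_involutions(3)]) auto
  qed
qed

lemma diag_transposed_mem: "mat_diag n (\<lambda>i. x $$ (v i, v i)) \<in> H"
proof (cases "x $$ (w p2, w p2) = x $$ (w p3, w p3)")
  case True
  have "mat_diag n (\<lambda>i. x $$ (v i, v i)) = mat_diag n (\<lambda>i. x $$ (w i, w i))"
    using True by (intro eq_matI) (auto simp: transpose_def)
  then show ?thesis using diag_perm_conj_mem by simp
next
  case False
  have "elem_mat n p3 p2 \<in> H"
  proof (cases "x $$ (w p3, w p2) = 0")
    case True
    then show ?thesis
      using elem_mat_mem_mono[OF elem_mat_41_mem[OF False True], of p3 p2] positions by auto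
  next
    case False
    then show ?thesis
      using positions by (intro elem_mat_mem_if_entry_signed_perm[OF inversion_involution_id]) auto
  qed
  then have "mat_diag n (\<lambda>i. x $$ (w i, w i))
      + (x $$ (w p3, w p3) - x $$ (w p2, w p2)) \<cdot>\<^sub>m (elem_mat n p2 p2 - elem_mat n p3 p3) \<in> H"
    using positions by (intro add_mem smult_mem diag_perm_conj_mem diag_elem_mat_diff_mem) auto
  moreover have "mat_diag n (\<lambda>i. x $$ (w i, w i))
      + (x $$ (w p3, w p3) - x $$ (w p2, w p2)) \<cdot>\<^sub>m (elem_mat n p2 p2 - elem_mat n p3 p3)
      = mat_diag n (\<lambda>i. x $$ (v i, v i))"
    using positions by (intro eq_matI) (auto simp: transpose_def)
  ultimately show ?thesis by simp
qed

lemma conj_transposed_mem: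
  assumes s0: "\<And>j. j < n \<Longrightarrow> s j \<noteq> 0"
  shows "monomial_mat_inv n v s * x * monomial_mat n v s \<in> H"
proof (rule mem_if_offdiag_support_and_diag_part)
  let ?M = "monomial_mat_inv n v s * x * monomial_mat n v s"
  have M: "?M $$ (a,b) = x $$ (v a, v b) * s b / s a" if "a < n" "b < n" for a b
    using index_conj_monomial_mat[OF v_permutes x_carrier that] .
  show "?M \<in> carrier_mat n n" using x_carrier by auto
  show "elem_mat n a b \<in> H" if "a < n" "b < n" "a \<noteq> b" "?M $$ (a,b) \<noteq> 0" for a b
    using that M by (intro elem_mat_mem_if_entry_transposed) auto
  have "diag_part n ?M = mat_diag n (\<lambda>i. x $$ (v i, v i))"
    using s0 M by (intro eq_matI) (auto simp: diag_part_def simp del: index_mult_mat)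
  then show "diag_part n ?M \<in> H" using diag_transposed_mem by simp
qed

lemma transposed_translate_not_in_cell_closure:
  assumes c: "c \<noteq> 0" and b: "b \<in> borel kind n"
  shows "monomial_mat n v (\<lambda>_. c) * b \<notin> cell_closure"
proof
  assume z: "monomial_mat n v (\<lambda>_. c) * b \<in> cell_closure"
  have mn: "Suc p2 \<le> n" using positions by simp
  have v_lt: "v a < n" if "a < Suc p2" for a
    by (rule permutes_less[OF v_permutes]) (use that mn in linarith)
  have "det (row_submat (Suc p2) v (monomial_mat n v (\<lambda>_. c) * b)) = 0"
    using pattern_values positions
    by (intro det_row_submat_cell_closure[OF z mn v_lt] transposed_perm_not_below) auto
  moreover have "row_submat (Suc p2) v (monomial_mat n v (\<lambda>_. c) * b) = c \<cdot>\<^sub>m row_submat (Suc p2) id b"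
    by (rule row_submat_monomial_mult[OF v_permutes borelD(1)[OF b] mn])
  moreover have "det (row_submat (Suc p2) id b) \<noteq> 0" by (rule det_leading_submat_borel[OF b mn])
  ultimately show False using c by (simp add: det_smult)
qed

lemma pattern_contradiction: False
proof -
  have n: "0 < n" using positions by simp
  obtain c where c: "c \<noteq> 0" "c \<cdot>\<^sub>m perm_mat n v \<in> grp kind n"
    using scaled_perm_mat_mem_grp[OF v_permutes n] by blast
  have inv: "monomial_mat n v (\<lambda>_. c) * monomial_mat_inv n v (\<lambda>_. c) = 1\<^sub>m n"
    "monomial_mat_inv n v (\<lambda>_. c) * monomial_mat n v (\<lambda>_. c) = 1\<^sub>m n"
    using c(1) by (auto intro: monomial_mat_mult_inv[OF v_permutes] monomial_mat_inv_mult[OF v_permutes])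
  obtain b where "b \<in> borel kind n" "monomial_mat n v (\<lambda>_. c) * b \<in> cell_closure"
    using borel_translate_in_cell_closure[OF c(2)[unfolded smult_perm_mat] _ inv
        conj_transposed_mem] c(1) by auto
  then show False using transposed_translate_not_in_cell_closure[OF c(1)] by blast
qed

end

theorem theorem1p8:
  fixes k :: group_kind and n :: nat and w :: "nat \<Rightarrow> nat"
  assumes "w permutes {..<n}"
    and "\<exists>x \<in> lie k n. \<exists>H. hessenberg_space k n H \<and>
           hessenberg_variety k n x H = schubert k n w"
  shows "avoids_pattern [4,2,3,1] n w"
proof -
  obtain x H where "x \<in> lie k n" "hessenberg_space k n H" "hessenberg_variety k n x H = schubert k n w"
    using assms(2) by blast
  then interpret hessenberg_schubert k n H x w
    using assms(1) by unfold_locales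
  show ?thesis
    unfolding avoids_pattern_def contains_pattern_def
  proof
    assume "\<exists>idx. (\<forall>a b. a < b \<and> b < length [4::nat,2,3,1] \<longrightarrow> idx a < idx b)
      \<and> (\<forall>a < length [4::nat,2,3,1]. idx a < n)
      \<and> (\<forall>a < length [4::nat,2,3,1]. \<forall>b < length [4::nat,2,3,1].
          (w (idx a) < w (idx b) \<longleftrightarrow> [4::nat,2,3,1] ! a < [4::nat,2,3,1] ! b))"
    then obtain idx :: "nat \<Rightarrow> nat"
      where inc: "\<forall>a b. a < b \<and> b < length [4::nat,2,3,1] \<longrightarrow> idx a < idx b"
      and lt: "\<forall>a < length [4::nat,2,3,1]. idx a < n"
      and ord: "\<forall>a < length [4::nat,2,3,1]. \<forall>b < length [4::nat,2,3,1].
          (w (idx a) < w (idx b) \<longleftrightarrow> [4::nat,2,3,1] ! a < [4::nat,2,3,1] ! b)"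
      by blast
    interpret hessenberg_schubert_4231 k n H x w "idx 0" "idx 1" "idx 2" "idx 3"
      using inc[rule_format, of 0 1] inc[rule_format, of 1 2] inc[rule_format, of 2 3]
        lt[rule_format, of 3] ord[rule_format, of 3 1] ord[rule_format, of 1 2] ord[rule_format, of 2 0]
      by unfold_locales simp_all
    show False by (rule pattern_contradiction)
  qed
qed

end
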